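(* Let $n\ge m$, $\nu=w\mu$ with $w$ a probability density w.r.t. $\mu$ satisfying $w\ge\alpha w_m$ for some $\alpha\in(0,1]$, and $\mathbf x\sim\gamma_n^\nu$. For a function $f\in L^2_\mu$ let $f^w=fw^{-1/2}$ and $f^w(\mathbf x)=(f^w(x_1),\dots,f^w(x_n))^T$. Then, with $\beta=1+(\alpha^{-1}-1)\frac mn$ and $\xi=0$ if $\nu=\nu_m$, $\xi=1$ if $\nu\ne\nu_m$, $$\mathbb E\Big(\Big\|\frac1n\Phi^w(\mathbf x)^Tf^w(\mathbf x)\Big\|_2^2\Big)\le\frac mn\alpha^{-1}(\beta+\xi m\alpha^{-1})\|f\|^2+\|P_{V_m}f\|^2.$$ If moreover $\boldsymbol\varphi(x)f(x)\ge0$ (componentwise) for $\mu$-a.e. $x$, then $$\mathbb E\Big(\Big\|\frac1n\Phi^w(\mathbf x)^Tf^w(\mathbf x)\Big\|_2^2\Big)\le\frac mn\alpha^{-1}\beta\|f\|^2+\Big(1+2\alpha^{-2}\frac mn\Big)\|P_{V_m}f\|^2.$$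
   Context: $\mathcal X$ is a Polish space with Borel probability measure $\mu$; $\|\cdot\|$ is the $L^2_\mu$ norm. $V_m\subset L^2_\mu$ has $L^2_\mu$-orthonormal basis $\varphi_1,\dots,\varphi_m$, $\boldsymbol\varphi=(\varphi_1,\dots,\varphi_m)^T$, $P_{V_m}$ the orthogonal projection onto $V_m$, $w_m(x)=\frac1m\|\boldsymbol\varphi(x)\|_2^2$, $\nu_m=w_m\mu$. For $\mathbf x=(x_1,\dots,x_n)$, $\Phi^w(\mathbf x)\in\mathbb R^{n\times m}$ has rows $w(x_i)^{-1/2}\boldsymbol\varphi(x_i)^T$. $\gamma_n^\nu$ is the probability measure on $\mathcal X^n$ with $d\gamma_n^\nu(\mathbf x)=\frac{(n-m)!}{n!}\det(\Phi^w(\mathbf x)^T\Phi^w(\mathbf x))\,d\nu^{\otimes n}(\mathbf x)$. *)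

theory Defs
  imports "HOL-Probability.Probability" "Jordan_Normal_Form.Determinant"
begin

text \<open>Basis functions phi 0, ..., phi (m-1) (0-based indexing of phi_1..phi_m);
  samples x = (x 0, ..., x (n-1)).\<close>

definition wm :: "nat \<Rightarrow> (nat \<Rightarrow> 'a \<Rightarrow> real) \<Rightarrow> 'a \<Rightarrow> real" where
  "wm m phi x = (\<Sum>k<m. (phi k x)^2) / real m"

definition Phi_w :: "nat \<Rightarrow> nat \<Rightarrow> (nat \<Rightarrow> 'a \<Rightarrow> real) \<Rightarrow> ('a \<Rightarrow> real) \<Rightarrow> (nat \<Rightarrow> 'a) \<Rightarrow> real mat" where
  "Phi_w n m phi w xs = mat n m (\<lambda>(i,k). phi k (xs i) / sqrt (w (xs i)))"

definition fw_vec :: "nat \<Rightarrow> ('a \<Rightarrow> real) \<Rightarrow> ('a \<Rightarrow> real) \<Rightarrow> (nat \<Rightarrow> 'a) \<Rightarrow> real vec" where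
  "fw_vec n f w xs = vec n (\<lambda>i. f (xs i) / sqrt (w (xs i)))"

definition gamma_n :: "'a measure \<Rightarrow> nat \<Rightarrow> nat \<Rightarrow> (nat \<Rightarrow> 'a \<Rightarrow> real) \<Rightarrow> ('a \<Rightarrow> real) \<Rightarrow> (nat \<Rightarrow> 'a) measure" where
  "gamma_n M n m phi w =
     density (PiM {..<n} (\<lambda>_. density M (\<lambda>x. ennreal (w x))))
       (\<lambda>xs. ennreal (fact (n - m) / fact n *
          Determinant.det (transpose_mat (Phi_w n m phi w xs) * Phi_w n m phi w xs)))"

definition sqnorm2 :: "real vec \<Rightarrow> real" where
  "sqnorm2 v = (\<Sum>k<dim_vec v. (v $ k)^2)"

definition L2sq :: "'a measure \<Rightarrow> ('a \<Rightarrow> real) \<Rightarrow> real" where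
  "L2sq M f = (\<integral>x. (f x)^2 \<partial>M)"

definition proj_V :: "'a measure \<Rightarrow> nat \<Rightarrow> (nat \<Rightarrow> 'a \<Rightarrow> real) \<Rightarrow> ('a \<Rightarrow> real) \<Rightarrow> 'a \<Rightarrow> real" where
  "proj_V M m phi f x = (\<Sum>k<m. (\<integral>y. f y * phi k y \<partial>M) * phi k x)"

end

theory Submission
  imports Defs
begin

text \<open>
  Pass to the measure \<open>\<nu> = w \<mu>\<close> and to \<open>u\<^sub>k = \<phi>\<^sub>k / \<surd>w\<close>, \<open>y = f / \<surd>w\<close>: the \<open>u\<^sub>k\<close> are
  orthonormal in \<open>L\<^sup>2(\<nu>)\<close>, their Christoffel function \<open>K = \<Sum>\<^sub>k u\<^sub>k\<^sup>2\<close> is at most \<open>m/\<alpha>\<close>, and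
  \<open>\<gamma>\<^sub>n\<close> has density \<open>(n-m)!/n! \<cdot> det G\<close> with respect to \<open>\<nu>\<^sup>n\<close>, where \<open>G\<close> is the Gram matrix of
  the \<open>u\<^sub>k\<close> at the sample points. The expectation can then be computed exactly. The
  Cauchy-Binet expansion writes \<open>det G\<close> as a sum over injective selections of \<open>m\<close> sample
  points; by exchangeability each selection contributes as much as the first \<open>m\<close> points, and
  Fubini splits that contribution into one-dimensional moments, whose signed sum over
  permutations is the determinant of a moment matrix that equals the identity outside at most
  two rows. The closed form involves \<open>\<integral>K\<^sup>2y\<^sup>2\<close>, \<open>\<integral>Ky\<^sup>2\<close>, \<open>\<integral>K u\<^sub>c y\<close> and
  \<open>\<integral>u\<^sub>c y = \<langle>f, \<phi>\<^sub>c\<rangle>\<close>. Bounding \<open>K\<close> by \<open>m/\<alpha>\<close> and applying Bessel's inequality to \<open>K y\<close> gives the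
  general estimate; when \<open>K = m\<close> or all \<open>u\<^sub>c y \<ge> 0\<close>, \<open>\<integral>K u\<^sub>c y\<close> is directly comparable to
  \<open>\<langle>f, \<phi>\<^sub>c\<rangle>\<close>, which gives the sharper ones.
\<close>

definition leibniz_det :: "nat \<Rightarrow> (nat \<Rightarrow> nat \<Rightarrow> real) \<Rightarrow> real" where
  "leibniz_det m M = (\<Sum>\<sigma>\<in>{\<sigma>. \<sigma> permutes {..<m}}. of_int (sign \<sigma>) * (\<Prod>k<m. M k (\<sigma> k)))"

lemma leibniz_det_restrict:
  assumes Q: "Q \<subseteq> {\<sigma>. \<sigma> permutes {..<m}}"
    and z: "\<And>\<sigma>. \<sigma> permutes {..<m} \<Longrightarrow> \<sigma> \<notin> Q \<Longrightarrow> (\<Prod>k<m. M k (\<sigma> k)) = 0"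
  shows "leibniz_det m M = (\<Sum>\<sigma>\<in>Q. of_int (sign \<sigma>) * (\<Prod>k<m. M k (\<sigma> k)))"
  unfolding leibniz_det_def
  by (rule sum.mono_neutral_right) (use Q z finite_permutations[of "{..<m}"] in auto)

lemma leibniz_det_identity_but_two:
  assumes ij: "i < m" "j < m" "i \<noteq> j"
    and M: "\<And>k l. k < m \<Longrightarrow> l < m \<Longrightarrow> k \<noteq> i \<Longrightarrow> k \<noteq> j \<Longrightarrow> M k l = (if k = l then 1 else 0)"
  shows "leibniz_det m M = M i i * M j j - M i j * M j i"
proof -
  let ?t = "Transposition.transpose i j"
  have tp: "?t permutes {..<m}" using ij by (simp add: permutes_swap_id)
  have "leibniz_det m M = (\<Sum>\<sigma>\<in>{id, ?t}. of_int (sign \<sigma>) * (\<Prod>k<m. M k (\<sigma> k)))"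
  proof (rule leibniz_det_restrict)
    show "{id, ?t} \<subseteq> {\<sigma>. \<sigma> permutes {..<m}}" using tp permutes_id by auto
    fix \<sigma> assume p: "\<sigma> permutes {..<m}" and nq: "\<sigma> \<notin> {id, ?t}"
    have "\<not> \<sigma> permutes {i, j}" using nq by (simp add: permutes_doubleton_iff)
    then obtain k where k: "k \<in> {..<m} - {i, j}" "\<sigma> k \<noteq> k"
      using permutes_superset[OF p, of "{i, j}"] by auto
    then have "M k (\<sigma> k) = 0" using M p permutes_in_image[of \<sigma> "{..<m}" k] by auto
    then show "(\<Prod>k<m. M k (\<sigma> k)) = 0" using k by (intro prod_zero) auto
  qed
  also have "\<dots> = (\<Prod>k<m. M k k) + (- (\<Prod>k<m. M k (?t k)))"
  proof -
    have "id \<noteq> ?t" using ij by (metis id_apply transpose_apply_first)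
    then show ?thesis using ij by (subst sum.insert) (auto simp: sign_swap_id)
  qed
  also have "(\<Prod>k<m. M k k) = M i i * M j j"
  proof -
    have "(\<Prod>k<m. M k k) = (\<Prod>k\<in>{i,j}. M k k) * (\<Prod>k\<in>{..<m}-{i,j}. M k k)"
      using ij by (subst prod.subset_diff[of "{i,j}"]) auto
    also have "(\<Prod>k\<in>{..<m}-{i,j}. M k k) = 1" using M by (intro prod.neutral) auto
    finally show ?thesis using ij by simp
  qed
  also have "(\<Prod>k<m. M k (?t k)) = M i j * M j i"
  proof -
    have "(\<Prod>k<m. M k (?t k)) = (\<Prod>k\<in>{i,j}. M k (?t k)) * (\<Prod>k\<in>{..<m}-{i,j}. M k (?t k))"
      using ij by (subst prod.subset_diff[of "{i,j}"]) auto
    also have "(\<Prod>k\<in>{..<m}-{i,j}. M k (?t k)) = 1" using M by (intro prod.neutral) auto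
    finally show ?thesis using ij by simp
  qed
  finally show ?thesis by simp
qed

lemma leibniz_det_identity_but_one:
  assumes M: "\<And>k l. k < m \<Longrightarrow> l < m \<Longrightarrow> k \<noteq> i \<Longrightarrow> M k l = (if k = l then 1 else 0)"
  shows "leibniz_det m M = (if i < m then M i i else 1)"
proof -
  have "leibniz_det m M = (\<Sum>\<sigma>\<in>{id}. of_int (sign \<sigma>) * (\<Prod>k<m. M k (\<sigma> k)))"
  proof (rule leibniz_det_restrict)
    show "{id} \<subseteq> {\<sigma>. \<sigma> permutes {..<m}}" using permutes_id by auto
    fix \<sigma> assume p: "\<sigma> permutes {..<m}" and nq: "\<sigma> \<notin> {id}"
    have "\<not> \<sigma> permutes {i}" using nq by simp
    then obtain k where k: "k \<in> {..<m} - {i}" "\<sigma> k \<noteq> k"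
      using permutes_superset[OF p, of "{i}"] by auto
    then have "M k (\<sigma> k) = 0" using M p permutes_in_image[of \<sigma> "{..<m}" k] by auto
    then show "(\<Prod>k<m. M k (\<sigma> k)) = 0" using k by (intro prod_zero) auto
  qed
  also have "\<dots> = (\<Prod>k<m. M k k)" by simp
  also have "\<dots> = (if i < m then M i i else 1)"
  proof (cases "i < m")
    case True
    have "(\<Prod>k<m. M k k) = (\<Prod>k\<in>{i}. M k k) * (\<Prod>k\<in>{..<m}-{i}. M k k)"
      using True by (subst prod.subset_diff[of "{i}"]) auto
    also have "(\<Prod>k\<in>{..<m}-{i}. M k k) = 1" using M by (intro prod.neutral) auto
    finally show ?thesis using True by simp
  next
    case False
    then show ?thesis using M by (auto intro!: prod.neutral)
  qed
  finally show ?thesis .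
qed

definition row_minor :: "nat \<Rightarrow> (nat \<Rightarrow> nat \<Rightarrow> real) \<Rightarrow> (nat \<Rightarrow> nat) \<Rightarrow> real" where
  "row_minor m A \<iota> = leibniz_det m (\<lambda>a b. A (\<iota> a) b)"

definition row_diag_prod :: "nat \<Rightarrow> (nat \<Rightarrow> nat \<Rightarrow> real) \<Rightarrow> (nat \<Rightarrow> nat) \<Rightarrow> real" where
  "row_diag_prod m A \<iota> = (\<Prod>a<m. A (\<iota> a) a)"

lemma row_minor_cong: "(\<And>a. a < m \<Longrightarrow> \<iota> a = \<iota>' a) \<Longrightarrow> row_minor m A \<iota> = row_minor m A \<iota>'"
  unfolding row_minor_def leibniz_det_def by (intro sum.cong prod.cong refl) auto

lemma row_diag_prod_cong: "(\<And>a. a < m \<Longrightarrow> \<iota> a = \<iota>' a) \<Longrightarrow> row_diag_prod m A \<iota> = row_diag_prod m A \<iota>'"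
  unfolding row_diag_prod_def by (intro prod.cong refl) auto

lemma row_minor_eq_det: "row_minor m A \<iota> = det (mat m m (\<lambda>(a,b). A (\<iota> a) b))"
proof -
  have "det (mat m m (\<lambda>(a,b). A (\<iota> a) b)) = (\<Sum>p\<in>{p. p permutes {0..<m}}.
     signof p * (\<Prod>i = 0..<m. (mat m m (\<lambda>(a,b). A (\<iota> a) b)) $$ (i, p i)))"
    by (rule det_def') simp
  also have "\<dots> = row_minor m A \<iota>"
    unfolding row_minor_def leibniz_det_def atLeast0LessThan
  proof (intro sum.cong refl arg_cong2[where f="(*)"] prod.cong)
    fix p a assume p: "p \<in> {p. p permutes {..<m}}" and a: "a \<in> {..<m}"
    then have "p a < m" using permutes_in_image[of p "{..<m}" a] by simp
    then show "mat m m (\<lambda>(a,b). A (\<iota> a) b) $$ (a, p a) = A (\<iota> a) (p a)" using a by simp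
  qed
  finally show ?thesis by simp
qed

lemma det_gram_expansion:
  fixes A :: "nat \<Rightarrow> nat \<Rightarrow> real"
  shows "det (transpose_mat (mat n m (\<lambda>(i,a). A i a)) * mat n m (\<lambda>(i,a). A i a))
     = (\<Sum>\<iota>\<in>PiE {..<m} (\<lambda>_. {..<n}). row_diag_prod m A \<iota> * row_minor m A \<iota>)"
proof -
  let ?M = "mat n m (\<lambda>(i,a). A i a)"
  let ?G = "transpose_mat ?M * ?M"
  have G: "?G \<in> carrier_mat m m" by (intro carrier_matI) auto
  have entry: "?G $$ (a,b) = (\<Sum>i<n. A i a * A i b)" if "a < m" "b < m" for a b
    using that by (simp add: scalar_prod_def atLeast0LessThan)
  have "det ?G = (\<Sum>p\<in>{p. p permutes {0..<m}}. signof p * (\<Prod>i = 0..<m. ?G $$ (i, p i)))"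
    by (rule det_def'[OF G])
  also have "\<dots> = (\<Sum>p\<in>{p. p permutes {..<m}}. of_int (sign p) * (\<Prod>a<m. \<Sum>i<n. A i a * A i (p a)))"
    unfolding atLeast0LessThan
  proof (intro sum.cong refl arg_cong2[where f="(*)"] prod.cong)
    fix p a assume p: "p \<in> {p. p permutes {..<m}}" and a: "a \<in> {..<m}"
    then have "p a < m" using permutes_in_image[of p "{..<m}" a] by simp
    then show "?G $$ (a, p a) = (\<Sum>i<n. A i a * A i (p a))" using a entry by simp
  qed
  also have "\<dots> = (\<Sum>p\<in>{p. p permutes {..<m}}. of_int (sign p) *
        (\<Sum>\<iota>\<in>PiE {..<m} (\<lambda>_. {..<n}). \<Prod>a<m. A (\<iota> a) a * A (\<iota> a) (p a)))"
    by (subst prod_sum_PiE) auto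
  also have "\<dots> = (\<Sum>\<iota>\<in>PiE {..<m} (\<lambda>_. {..<n}). \<Sum>p\<in>{p. p permutes {..<m}}. 
        row_diag_prod m A \<iota> * (of_int (sign p) * (\<Prod>a<m. A (\<iota> a) (p a))))"
    by (subst sum.swap) (simp add: sum_distrib_left row_diag_prod_def prod.distrib mult_ac)
  also have "\<dots> = (\<Sum>\<iota>\<in>PiE {..<m} (\<lambda>_. {..<n}). row_diag_prod m A \<iota> * row_minor m A \<iota>)"
    by (simp add: row_minor_def leibniz_det_def sum_distrib_left)
  finally show ?thesis .
qed

lemma row_minor_not_inj:
  assumes "\<not> inj_on \<iota> {..<m}"
  shows "row_minor m A \<iota> = 0"
proof -
  obtain a b where ab: "a < m" "b < m" "a \<noteq> b" "\<iota> a = \<iota> b"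
    using assms unfolding inj_on_def by auto
  show ?thesis unfolding row_minor_eq_det
    by (rule det_identical_rows[of _ m a b]) (use ab in auto)
qed

lemma permutes_less: "\<tau> permutes {..<m} \<Longrightarrow> (a::nat) < m \<Longrightarrow> \<tau> a < m"
  using permutes_in_image[of \<tau> "{..<m}" a] by simp

lemma row_minor_permute:
  assumes t: "\<tau> permutes {..<m}"
  shows "row_minor m A (\<iota> \<circ> \<tau>) = of_int (sign \<tau>) * row_minor m A \<iota>"
proof -
  let ?M = "mat m m (\<lambda>(a,b). A (\<iota> a) b)"
  have t0: "\<tau> permutes {0..<m}" using t by (simp add: atLeast0LessThan)
  have "det (mat m m (\<lambda>(i,j). ?M $$ (\<tau> i, j))) = signof \<tau> * det ?M"
    by (rule det_permute_rows[OF _ t0]) simp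
  moreover have "mat m m (\<lambda>(i,j). ?M $$ (\<tau> i, j)) = mat m m (\<lambda>(a,b). A ((\<iota> \<circ> \<tau>) a) b)"
    by (rule eq_matI) (auto simp: permutes_less[OF t])
  ultimately show ?thesis by (simp add: row_minor_eq_det)
qed

lemma signed_sum_row_diag_prod:
  "(\<Sum>\<tau>\<in>{\<tau>. \<tau> permutes {..<m}}. of_int (sign \<tau>) * row_diag_prod m A (\<iota> \<circ> \<tau>)) = row_minor m A \<iota>"
proof -
  let ?M = "mat m m (\<lambda>(a,b). A (\<iota> a) b)"
  have "det (transpose_mat ?M) = det ?M" by (rule det_transpose[of _ m]) simp
  moreover have "det (transpose_mat ?M) = (\<Sum>p\<in>{p. p permutes {0..<m}}.
     signof p * (\<Prod>i = 0..<m. (transpose_mat ?M) $$ (i, p i)))"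
    by (rule det_def') simp
  moreover have "\<dots> = (\<Sum>\<tau>\<in>{\<tau>. \<tau> permutes {..<m}}. of_int (sign \<tau>) * row_diag_prod m A (\<iota> \<circ> \<tau>))"
    unfolding atLeast0LessThan row_diag_prod_def
  proof (intro sum.cong refl arg_cong2[where f="(*)"] prod.cong)
    fix p a assume p: "p \<in> {p. p permutes {..<m}}" and a: "a \<in> {..<m}"
    then have "p a < m" using permutes_less by auto
    then show "transpose_mat ?M $$ (a, p a) = A ((\<iota> \<circ> p) a) a" using a by simp
  qed
  ultimately show ?thesis by (simp add: row_minor_eq_det)
qed

lemma sum_PiE_reindex_permutes:
  fixes m n :: nat
  assumes t: "\<tau> permutes {..<m}"
    and g: "\<And>\<iota> \<iota>'. (\<And>a. a < m \<Longrightarrow> \<iota> a = \<iota>' a) \<Longrightarrow> g \<iota> = g \<iota>'"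
  shows "(\<Sum>\<iota>\<in>PiE {..<m} (\<lambda>_. {..<n}). g (\<iota> \<circ> \<tau>)) = (\<Sum>\<iota>\<in>PiE {..<m} (\<lambda>_. {..<n}). (g \<iota> :: real))"
proof (rule sum.reindex_bij_witness[where i="\<lambda>\<iota>. restrict (\<iota> \<circ> Hilbert_Choice.inv \<tau>) {..<m}"
                                        and j="\<lambda>\<iota>. restrict (\<iota> \<circ> \<tau>) {..<m}"])
  have ti: "Hilbert_Choice.inv \<tau> permutes {..<m}" using t by (rule permutes_inv)
  fix a assume a: "a \<in> PiE {..<m} (\<lambda>_. {..<n})"
  show "restrict (restrict (a \<circ> \<tau>) {..<m} \<circ> Hilbert_Choice.inv \<tau>) {..<m} = a"
  proof (rule ext)
    fix x show "restrict (restrict (a \<circ> \<tau>) {..<m} \<circ> Hilbert_Choice.inv \<tau>) {..<m} x = a x"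
      using a permutes_less[OF ti, of x] permutes_inverses(1)[OF t] by (cases "x < m") (auto simp: PiE_def extensional_def)
  qed
  show "restrict (a \<circ> \<tau>) {..<m} \<in> PiE {..<m} (\<lambda>_. {..<n})"
    using a permutes_less[OF t] by (auto simp: PiE_def Pi_def)
  show "g (restrict (a \<circ> \<tau>) {..<m}) = g (a \<circ> \<tau>)" by (rule g) simp
next
  have ti: "Hilbert_Choice.inv \<tau> permutes {..<m}" using t by (rule permutes_inv)
  fix b assume b: "b \<in> PiE {..<m} (\<lambda>_. {..<n})"
  show "restrict (restrict (b \<circ> Hilbert_Choice.inv \<tau>) {..<m} \<circ> \<tau>) {..<m} = b"
  proof (rule ext)
    fix x show "restrict (restrict (b \<circ> Hilbert_Choice.inv \<tau>) {..<m} \<circ> \<tau>) {..<m} x = b x"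
      using b permutes_less[OF t, of x] permutes_inverses(2)[OF t] by (cases "x < m") (auto simp: PiE_def extensional_def)
  qed
  show "restrict (b \<circ> Hilbert_Choice.inv \<tau>) {..<m} \<in> PiE {..<m} (\<lambda>_. {..<n})"
    using b permutes_less[OF ti] by (auto simp: PiE_def Pi_def)
qed

text \<open>Averaging the row expansion over the \<open>m!\<close> reorderings of the selected rows turns it
  into a sum of squared minors (Cauchy-Binet).\<close>

lemma fact_mult_det_gram:
  fixes A :: "nat \<Rightarrow> nat \<Rightarrow> real"
  shows "fact m * det (transpose_mat (mat n m (\<lambda>(i,a). A i a)) * mat n m (\<lambda>(i,a). A i a))
     = (\<Sum>\<iota>\<in>PiE {..<m} (\<lambda>_. {..<n}). (row_minor m A \<iota>)^2)"
proof -
  let ?P = "PiE {..<m} (\<lambda>_. {..<n})"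
  let ?T = "{\<tau>. \<tau> permutes ({..<m}::nat set)}"
  let ?D = "det (transpose_mat (mat n m (\<lambda>(i,a). A i a)) * mat n m (\<lambda>(i,a). A i a))"
  have D: "?D = (\<Sum>\<iota>\<in>?P. row_diag_prod m A \<iota> * row_minor m A \<iota>)" by (rule det_gram_expansion)
  have Dt: "?D = (\<Sum>\<iota>\<in>?P. of_int (sign \<tau>) * row_diag_prod m A (\<iota> \<circ> \<tau>) * row_minor m A \<iota>)" if t: "\<tau> \<in> ?T" for \<tau>
  proof -
    have "?D = (\<Sum>\<iota>\<in>?P. row_diag_prod m A (\<iota> \<circ> \<tau>) * row_minor m A (\<iota> \<circ> \<tau>))"
      unfolding D
      by (rule sum_PiE_reindex_permutes[symmetric]) (use t in \<open>auto intro!: arg_cong2[where f="(*)"] row_diag_prod_cong row_minor_cong\<close>)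
    also have "\<dots> = (\<Sum>\<iota>\<in>?P. of_int (sign \<tau>) * row_diag_prod m A (\<iota> \<circ> \<tau>) * row_minor m A \<iota>)"
      using t by (intro sum.cong refl) (simp add: row_minor_permute)
    finally show ?thesis .
  qed
  have "fact m * ?D = (\<Sum>\<tau>\<in>?T. ?D)"
    using card_permutations[of "{..<m}" m] by simp
  also have "\<dots> = (\<Sum>\<tau>\<in>?T. \<Sum>\<iota>\<in>?P. of_int (sign \<tau>) * row_diag_prod m A (\<iota> \<circ> \<tau>) * row_minor m A \<iota>)"
    using Dt by (intro sum.cong refl) auto
  also have "\<dots> = (\<Sum>\<iota>\<in>?P. (\<Sum>\<tau>\<in>?T. of_int (sign \<tau>) * row_diag_prod m A (\<iota> \<circ> \<tau>)) * row_minor m A \<iota>)"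
    by (subst sum.swap) (simp add: sum_distrib_right)
  also have "\<dots> = (\<Sum>\<iota>\<in>?P. (row_minor m A \<iota>)^2)"
    by (simp add: signed_sum_row_diag_prod power2_eq_square)
  finally show ?thesis .
qed

lemma det_gram_nonneg:
  fixes A :: "nat \<Rightarrow> nat \<Rightarrow> real"
  shows "0 \<le> det (transpose_mat (mat n m (\<lambda>(i,a). A i a)) * mat n m (\<lambda>(i,a). A i a))"
proof -
  have "0 \<le> fact m * det (transpose_mat (mat n m (\<lambda>(i,a). A i a)) * mat n m (\<lambda>(i,a). A i a))"
    unfolding fact_mult_det_gram by (intro sum_nonneg) auto
  moreover have "(0::real) < fact m" by simp
  ultimately show ?thesis by (metis zero_le_mult_iff not_less)
qed

lemma bij_betw_inj_PiE_distinct_lists: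
  fixes m n :: nat
  shows "bij_betw (\<lambda>\<iota>. map \<iota> [0..<m]) {\<iota>\<in>PiE {..<m} (\<lambda>_. {..<n}). inj_on \<iota> {..<m}}
     {xs. length xs = m \<and> distinct xs \<and> set xs \<subseteq> {..<n}}"
  (is "bij_betw _ ?S ?L")
proof (rule bij_betwI')
  fix x y assume x: "x \<in> ?S" and y: "y \<in> ?S"
  show "(map x [0..<m] = map y [0..<m]) = (x = y)"
  proof
    assume "map x [0..<m] = map y [0..<m]"
    then have "\<forall>a<m. x a = y a" by (simp add: map_eq_conv)
    then show "x = y" using x y by (intro PiE_ext[of _ "{..<m}" "\<lambda>_. {..<n}"]) auto
  qed simp
next
  fix x assume x: "x \<in> ?S"
  then show "map x [0..<m] \<in> ?L"
    by (auto simp: distinct_map PiE_def Pi_def atLeast0LessThan)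
next
  fix xs assume xs: "xs \<in> ?L"
  let ?i = "restrict (\<lambda>a. xs ! a) {..<m}"
  have mp: "map ?i [0..<m] = xs" using xs by (intro nth_equalityI) auto
  have "xs ! a < n" if "a < m" for a
  proof -
    have "xs ! a \<in> set xs" using xs that by simp
    then show ?thesis using xs by auto
  qed
  then have "?i \<in> PiE {..<m} (\<lambda>_. {..<n})" by (simp add: restrict_PiE_iff)
  moreover have "inj_on ?i {..<m}"
  proof -
    have "distinct (map ?i [0..<m])" using mp xs by simp
    then have "inj_on ?i (set [0..<m])" by (simp only: distinct_map)
    then show ?thesis by (simp add: atLeast0LessThan)
  qed
  ultimately show "\<exists>x\<in>?S. xs = map x [0..<m]" using mp by (intro bexI[of _ ?i]) auto
qed

lemma card_inj_PiE_lessThan: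
  fixes m n :: nat
  assumes "m \<le> n"
  shows "real (card {\<iota>\<in>PiE {..<m} (\<lambda>_. {..<n}). inj_on \<iota> {..<m}}) = fact n / fact (n - m)"
proof -
  have "card {\<iota>\<in>PiE {..<m} (\<lambda>_. {..<n}). inj_on \<iota> {..<m}} = \<Prod>{n - m + 1..n}"
    using bij_betw_same_card[OF bij_betw_inj_PiE_distinct_lists[of m n]]
      card_lists_distinct_length_eq[of "{..<n}" m] assms by simp
  moreover have "(fact n :: nat) = fact (n - m) * \<Prod>{n - m + 1..n}"
    using fact_eq_fact_times[of "n - m" n] by simp
  then have "(fact n :: real) = fact (n - m) * real (\<Prod>{n - m + 1..n})"
    by (metis of_nat_fact of_nat_mult)
  ultimately show ?thesis by simp
qed

lemma abs_le_one_plus_square: "\<bar>t::real\<bar> \<le> 1 + t^2"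
proof -
  have "0 \<le> (\<bar>t\<bar> - 1)^2" by simp
  then show ?thesis by (simp add: power2_eq_square algebra_simps)
qed

lemma inj_on_extends_to_permutes:
  fixes \<iota> :: "nat \<Rightarrow> nat" and m n :: nat
  assumes inj: "inj_on \<iota> {..<m}" and im: "\<iota> ` {..<m} \<subseteq> {..<n}" and mn: "m \<le> n"
  shows "\<exists>\<pi>. \<pi> permutes {..<n} \<and> (\<forall>a<m. \<pi> a = \<iota> a)"
proof -
  let ?A = "{m..<n}" and ?B = "{..<n} - \<iota> ` {..<m}"
  have "card ?B = n - m" using inj im by (simp add: card_Diff_subset card_image)
  then obtain h where h: "bij_betw h ?A ?B" using finite_same_card_bij[of ?A ?B] by auto
  define \<pi> where "\<pi> k = (if k < m then \<iota> k else if k < n then h k else k)" for k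
  have "bij_betw (\<lambda>k. if k \<in> {..<m} then \<iota> k else h k) ({..<m} \<union> ?A) (\<iota> ` {..<m} \<union> ?B)"
    using inj h by (intro bij_betw_disjoint_Un) (auto simp: inj_on_imp_bij_betw)
  moreover have "{..<m} \<union> ?A = {..<n}" "\<iota> ` {..<m} \<union> ?B = {..<n}" using mn im by auto
  ultimately have "bij_betw (\<lambda>k. if k < m then \<iota> k else h k) {..<n} {..<n}" by simp
  then have "bij_betw \<pi> {..<n} {..<n}"
    by (rule bij_betw_cong[THEN iffD1, rotated]) (use mn in \<open>simp add: \<pi>_def\<close>)
  then have "\<pi> permutes {..<n}" by (rule bij_imp_permutes) (use mn in \<open>auto simp: \<pi>_def\<close>)
  then show ?thesis by (auto simp: \<pi>_def)
qed

locale orthonormal_sampling =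
  fixes N :: "'a measure" and m n :: nat and u :: "nat \<Rightarrow> 'a \<Rightarrow> real"
    and y :: "'a \<Rightarrow> real" and B :: real
  assumes prob_space_N: "prob_space N"
    and u_meas[measurable]: "\<And>a. u a \<in> borel_measurable N"
    and y_meas[measurable]: "y \<in> borel_measurable N"
    and orthonormal: "\<And>a b. a < m \<Longrightarrow> b < m \<Longrightarrow> (\<integral>z. u a z * u b z \<partial>N) = (if a = b then 1 else 0)"
    and christoffel_le: "AE z in N. (\<Sum>a<m. (u a z)^2) \<le> B"
    and B_ge_1: "1 \<le> B"
    and y_sq_integrable: "integrable N (\<lambda>z. (y z)^2)"
    and mn: "m \<le> n"
begin

definition uy :: "nat \<Rightarrow> 'a \<Rightarrow> real" where "uy c z = u c z * y z"
definition christoffel :: "'a \<Rightarrow> real" where "christoffel z = (\<Sum>a<m. (u a z)^2)"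
abbreviation PN where "PN \<equiv> PiM {..<n} (\<lambda>_. N)"

lemma uy_meas[measurable]: "uy c \<in> borel_measurable N" unfolding uy_def by measurable
lemma christoffel_meas[measurable]: "christoffel \<in> borel_measurable N" unfolding christoffel_def by measurable

interpretation N: prob_space N by (rule prob_space_N)
interpretation PS: product_sigma_finite "\<lambda>_::nat. N"
  by (simp add: product_sigma_finite_def N.sigma_finite_measure_axioms)

definition bounded_at :: "'a \<Rightarrow> bool" where
  "bounded_at z \<longleftrightarrow> christoffel z \<le> B \<and> (\<forall>a<m. \<bar>u a z\<bar> \<le> sqrt B)"

lemma AE_bounded_at: "AE z in N. bounded_at z"
  using christoffel_le
proof (rule eventually_mono)
  fix z assume le: "(\<Sum>a<m. (u a z)^2) \<le> B"
  have "\<bar>u a z\<bar> \<le> sqrt B" if "a < m" for a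
  proof -
    have "(u a z)^2 \<le> (\<Sum>a<m. (u a z)^2)" using that by (intro member_le_sum) auto
    then show ?thesis using le by (metis order.trans real_sqrt_abs real_sqrt_le_mono)
  qed
  then show "bounded_at z" unfolding bounded_at_def christoffel_def using le by auto
qed

lemma christoffel_nonneg: "0 \<le> christoffel z" unfolding christoffel_def by (intro sum_nonneg) auto

lemma integrable_bounded_at:
  assumes "f \<in> borel_measurable N" and "\<And>z. bounded_at z \<Longrightarrow> \<bar>f z\<bar> \<le> C * (1 + (y z)^2)"
  shows "integrable N f"
proof (rule Bochner_Integration.integrable_bound)
  show "integrable N (\<lambda>z. \<bar>C\<bar> * (1 + (y z)^2))"
    using y_sq_integrable by (intro integrable_mult_right Bochner_Integration.integrable_add) auto
  have "\<bar>f z\<bar> \<le> \<bar>C\<bar> * (1 + (y z)^2)" if "bounded_at z" for z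
    using assms(2)[OF that] abs_ge_self[of C] by (smt (verit) mult_right_mono zero_le_power2)
  then show "AE z in N. norm (f z) \<le> norm (\<bar>C\<bar> * (1 + (y z)^2))"
    using AE_bounded_at by (auto elim: eventually_mono)
qed (use assms(1) in auto)

lemma sqrt_B: "0 \<le> sqrt B" "sqrt B * sqrt B = B" "0 \<le> B" using B_ge_1 by auto

lemma y_le_one_plus_square: "\<bar>y z\<bar> \<le> 1 + (y z)^2" "(y z)^2 \<le> 1 + (y z)^2" "0 \<le> (y z)^2"
  using abs_le_one_plus_square by auto

lemma bounded_at_u: "bounded_at z \<Longrightarrow> a < m \<Longrightarrow> \<bar>u a z\<bar> \<le> sqrt B" unfolding bounded_at_def by auto
lemma bounded_at_christoffel: "bounded_at z \<Longrightarrow> \<bar>christoffel z\<bar> \<le> B" unfolding bounded_at_def using christoffel_nonneg by auto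

lemma bounded_at_uu: "bounded_at z \<Longrightarrow> a < m \<Longrightarrow> b < m \<Longrightarrow> \<bar>u a z * u b z\<bar> \<le> B"
proof -
  assume "bounded_at z" "a < m" "b < m"
  then have "\<bar>u a z * u b z\<bar> \<le> sqrt B * sqrt B" unfolding abs_mult
    by (intro mult_mono bounded_at_u) (auto simp: sqrt_B)
  then show ?thesis using sqrt_B by simp
qed

lemma bounded_at_uy: "bounded_at z \<Longrightarrow> c < m \<Longrightarrow> \<bar>uy c z\<bar> \<le> sqrt B * (1 + (y z)^2)"
proof -
  assume "bounded_at z" "c < m"
  then show ?thesis unfolding uy_def abs_mult
    by (intro mult_mono bounded_at_u y_le_one_plus_square) (auto simp: sqrt_B)
qed

lemma bounded_at_uyuy: "bounded_at z \<Longrightarrow> c < m \<Longrightarrow> d < m \<Longrightarrow> \<bar>uy c z * uy d z\<bar> \<le> B * (1 + (y z)^2)"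
proof -
  assume "bounded_at z" "c < m" "d < m"
  then have "\<bar>uy c z * uy d z\<bar> = \<bar>u c z * u d z\<bar> * (y z)^2" unfolding uy_def
    by (simp add: abs_mult power2_eq_square mult_ac)
  also have "\<dots> \<le> B * (1 + (y z)^2)" using \<open>bounded_at z\<close> \<open>c < m\<close> \<open>d < m\<close>
    by (intro mult_mono bounded_at_uu y_le_one_plus_square) (auto simp: sqrt_B)
  finally show ?thesis .
qed

lemma integrable_uu: "a < m \<Longrightarrow> b < m \<Longrightarrow> integrable N (\<lambda>z. u a z * u b z)"
proof (rule integrable_bounded_at[where C=B])
  fix z assume "bounded_at z" "a < m" "b < m"
  then have "\<bar>u a z * u b z\<bar> \<le> B" by (rule bounded_at_uu)
  also have "B \<le> B * (1 + (y z)^2)" using sqrt_B by (simp add: algebra_simps)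
  finally show "\<bar>u a z * u b z\<bar> \<le> B * (1 + (y z)^2)" .
qed simp

lemma integrable_uy: "c < m \<Longrightarrow> integrable N (uy c)"
  by (rule integrable_bounded_at[where C="sqrt B"]) (auto intro: bounded_at_uy)

lemma integrable_uuy: "a < m \<Longrightarrow> b < m \<Longrightarrow> c < m \<Longrightarrow> integrable N (\<lambda>z. u a z * u b z * uy c z)"
proof (rule integrable_bounded_at[where C="B * sqrt B"])
  fix z assume "bounded_at z" "a < m" "b < m" "c < m"
  then show "\<bar>u a z * u b z * uy c z\<bar> \<le> B * sqrt B * (1 + (y z)^2)"
    unfolding abs_mult[of "u a z * u b z"] mult.assoc[of B]
    by (intro mult_mono bounded_at_uu bounded_at_uy) (auto simp: sqrt_B)
qed simp

lemma integrable_uuyy: "a < m \<Longrightarrow> b < m \<Longrightarrow> c < m \<Longrightarrow> d < m \<Longrightarrow> integrable N (\<lambda>z. u a z * u b z * (uy c z * uy d z))"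
proof (rule integrable_bounded_at[where C="B * B"])
  fix z assume "bounded_at z" "a < m" "b < m" "c < m" "d < m"
  then show "\<bar>u a z * u b z * (uy c z * uy d z)\<bar> \<le> B * B * (1 + (y z)^2)"
    unfolding abs_mult[of "u a z * u b z"] mult.assoc[of B]
    by (intro mult_mono bounded_at_uu bounded_at_uyuy) (auto simp: sqrt_B)
qed simp

lemma integrable_christoffel_uy: "c < m \<Longrightarrow> integrable N (\<lambda>z. christoffel z * uy c z)"
proof (rule integrable_bounded_at[where C="B * sqrt B"])
  fix z assume "bounded_at z" "c < m"
  then show "\<bar>christoffel z * uy c z\<bar> \<le> B * sqrt B * (1 + (y z)^2)"
    unfolding abs_mult mult.assoc[of B]
    by (intro mult_mono bounded_at_christoffel bounded_at_uy) (auto simp: sqrt_B)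
qed simp

lemma integrable_christoffel_y2: "integrable N (\<lambda>z. christoffel z * (y z)^2)"
proof (rule integrable_bounded_at[where C="B"])
  fix z assume "bounded_at z"
  then show "\<bar>christoffel z * (y z)^2\<bar> \<le> B * (1 + (y z)^2)"
    unfolding abs_mult by (intro mult_mono bounded_at_christoffel y_le_one_plus_square) (auto simp: sqrt_B)
qed simp

lemma integrable_christoffel2_y2: "integrable N (\<lambda>z. christoffel z * christoffel z * (y z)^2)"
proof (rule integrable_bounded_at[where C="B * B"])
  fix z assume "bounded_at z"
  then show "\<bar>christoffel z * christoffel z * (y z)^2\<bar> \<le> B * B * (1 + (y z)^2)"
    unfolding abs_mult by (intro mult_mono bounded_at_christoffel y_le_one_plus_square) (auto simp: sqrt_B)
qed simp

text \<open>Expanding the square and the minor of the first \<open>m\<close> sample points yields the terms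
  \<open>sample_term\<close>, each a product of functions of single coordinates, so that its integral
  against the product measure factorises.\<close>

definition sample_factor :: "(nat \<Rightarrow> nat) \<Rightarrow> nat \<Rightarrow> nat \<Rightarrow> nat \<Rightarrow> nat \<Rightarrow> 'a \<Rightarrow> real" where
  "sample_factor \<sigma> c i j k z = (if k < m then u k z * u (\<sigma> k) z else 1) *
      ((if k = i then uy c z else 1) * (if k = j then uy c z else 1))"

lemma sample_factor_meas[measurable]: "sample_factor \<sigma> c i j k \<in> borel_measurable N"
  unfolding sample_factor_def by measurable

lemma integrable_sample_factor:
  assumes c: "c < m" and s: "\<sigma> permutes {..<m}"
  shows "integrable N (sample_factor \<sigma> c i j k)"
proof (rule integrable_bounded_at[where C="B * (B + sqrt B + 1)"])
  fix z assume z: "bounded_at z"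
  have uu: "\<bar>if k < m then u k z * u (\<sigma> k) z else 1\<bar> \<le> B"
    using B_ge_1 bounded_at_uu[OF z _ permutes_less[OF s]] by auto
  have "\<bar>(if k = i then uy c z else 1) * (if k = j then uy c z else 1)\<bar> \<le> (B + sqrt B + 1) * (1 + (y z)^2)"
  proof -
    have "\<bar>(if k = i then uy c z else 1) * (if k = j then uy c z else 1)\<bar>
        \<le> (if k = i \<and> k = j then B else if k = i \<or> k = j then sqrt B else 1) * (1 + (y z)^2)"
      using bounded_at_uyuy[OF z c c] bounded_at_uy[OF z c] y_le_one_plus_square(2,3) by auto
    also have "\<dots> \<le> (B + sqrt B + 1) * (1 + (y z)^2)"
      using sqrt_B by (intro mult_right_mono) auto
    finally show ?thesis .
  qed
  then have "\<bar>sample_factor \<sigma> c i j k z\<bar> \<le> B * ((B + sqrt B + 1) * (1 + (y z)^2))"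
    unfolding sample_factor_def abs_mult[of "if k < m then _ else _"]
    using uu sqrt_B by (intro mult_mono) auto
  then show "\<bar>sample_factor \<sigma> c i j k z\<bar> \<le> B * (B + sqrt B + 1) * (1 + (y z)^2)"
    by (simp add: mult_ac)
qed simp

definition sample_term :: "(nat \<Rightarrow> nat) \<Rightarrow> nat \<Rightarrow> nat \<Rightarrow> nat \<Rightarrow> (nat \<Rightarrow> 'a) \<Rightarrow> real" where
  "sample_term \<sigma> c i j x = uy c (x i) * uy c (x j) * (\<Prod>a<m. u a (x a) * u (\<sigma> a) (x a))"

lemma sample_term_prod:
  assumes "i < n" "j < n"
  shows "sample_term \<sigma> c i j x = (\<Prod>k<n. sample_factor \<sigma> c i j k (x k))"
proof -
  have "(\<Prod>k<n. sample_factor \<sigma> c i j k (x k)) = (\<Prod>k<n. (if k < m then u k (x k) * u (\<sigma> k) (x k) else 1)) *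
      ((\<Prod>k<n. (if k = i then uy c (x k) else 1)) * (\<Prod>k<n. (if k = j then uy c (x k) else 1)))"
    unfolding sample_factor_def by (simp add: prod.distrib)
  also have "(\<Prod>k<n. (if k = i then uy c (x k) else 1)) = uy c (x i)"
    using assms by (subst prod.delta) auto
  also have "(\<Prod>k<n. (if k = j then uy c (x k) else 1)) = uy c (x j)"
    using assms by (subst prod.delta) auto
  also have "(\<Prod>k<n. (if k < m then u k (x k) * u (\<sigma> k) (x k) else 1)) = (\<Prod>a<m. u a (x a) * u (\<sigma> a) (x a))"
    using mn by (intro prod.mono_neutral_cong_right) auto
  finally show ?thesis unfolding sample_term_def by (simp add: mult_ac)
qed

lemma integrable_sample_term:
  assumes "i < n" "j < n" "c < m" "\<sigma> permutes {..<m}"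
  shows "integrable PN (sample_term \<sigma> c i j)"
proof -
  have "integrable PN (\<lambda>x. \<Prod>k<n. sample_factor \<sigma> c i j k (x k))"
    using assms by (intro PS.product_integrable_prod integrable_sample_factor) auto
  moreover have "sample_term \<sigma> c i j = (\<lambda>x. \<Prod>k<n. sample_factor \<sigma> c i j k (x k))"
    using sample_term_prod[OF assms(1,2)] by (intro ext) simp
  ultimately show ?thesis by simp
qed

lemma integral_sample_term:
  assumes "i < n" "j < n" "c < m" "\<sigma> permutes {..<m}"
  shows "(\<integral>x. sample_term \<sigma> c i j x \<partial>PN) = (\<Prod>k<n. \<integral>z. sample_factor \<sigma> c i j k z \<partial>N)"
proof -
  have "(\<integral>x. sample_term \<sigma> c i j x \<partial>PN) = (\<integral>x. (\<Prod>k<n. sample_factor \<sigma> c i j k (x k)) \<partial>PN)"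
    using sample_term_prod[OF assms(1,2)] by simp
  also have "\<dots> = (\<Prod>k<n. \<integral>z. sample_factor \<sigma> c i j k z \<partial>N)"
    using assms by (intro PS.product_integral_prod integrable_sample_factor) auto
  finally show ?thesis .
qed

definition y_factor :: "nat \<Rightarrow> nat \<Rightarrow> nat \<Rightarrow> nat \<Rightarrow> 'a \<Rightarrow> real" where
  "y_factor c i j k z = (if k = i then uy c z else 1) * (if k = j then uy c z else 1)"

definition factor_moment :: "nat \<Rightarrow> nat \<Rightarrow> nat \<Rightarrow> nat \<Rightarrow> nat \<Rightarrow> real" where
  "factor_moment c i j k l = (\<integral>z. u k z * u l z * y_factor c i j k z \<partial>N)"

definition tail_moment :: "nat \<Rightarrow> nat \<Rightarrow> nat \<Rightarrow> real" where
  "tail_moment c i j = (\<Prod>k\<in>{m..<n}. \<integral>z. y_factor c i j k z \<partial>N)"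

lemma signed_sum_integral_sample_term:
  assumes "i < n" "j < n" "c < m"
  shows "(\<Sum>\<sigma>\<in>{\<sigma>. \<sigma> permutes {..<m}}. of_int (sign \<sigma>) * (\<integral>x. sample_term \<sigma> c i j x \<partial>PN))
     = leibniz_det m (factor_moment c i j) * tail_moment c i j"
proof -
  have "(\<integral>x. sample_term \<sigma> c i j x \<partial>PN) = (\<Prod>k<m. factor_moment c i j k (\<sigma> k)) * tail_moment c i j"
    if s: "\<sigma> permutes {..<m}" for \<sigma>
  proof -
    have "(\<integral>x. sample_term \<sigma> c i j x \<partial>PN) = (\<Prod>k<n. \<integral>z. sample_factor \<sigma> c i j k z \<partial>N)"
      using integral_sample_term assms s by blast
    also have "\<dots> = (\<Prod>k\<in>{0..<m}. \<integral>z. sample_factor \<sigma> c i j k z \<partial>N) * (\<Prod>k\<in>{m..<n}. \<integral>z. sample_factor \<sigma> c i j k z \<partial>N)"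
      using mn by (simp add: prod.atLeastLessThan_concat atLeast0LessThan[symmetric])
    also have "(\<Prod>k\<in>{0..<m}. \<integral>z. sample_factor \<sigma> c i j k z \<partial>N) = (\<Prod>k<m. factor_moment c i j k (\<sigma> k))"
      unfolding atLeast0LessThan factor_moment_def sample_factor_def y_factor_def by (intro prod.cong refl) (simp add: mult_ac)
    also have "(\<Prod>k\<in>{m..<n}. \<integral>z. sample_factor \<sigma> c i j k z \<partial>N) = tail_moment c i j"
      unfolding tail_moment_def sample_factor_def y_factor_def by (intro prod.cong refl) simp
    finally show ?thesis .
  qed
  then show ?thesis unfolding leibniz_det_def sum_distrib_right
    by (intro sum.cong refl) (simp add: mult_ac)
qed

definition uuy_int :: "nat \<Rightarrow> nat \<Rightarrow> nat \<Rightarrow> real" where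
  "uuy_int c a b = (\<integral>z. u a z * u b z * uy c z \<partial>N)"
definition uuyy_int :: "nat \<Rightarrow> nat \<Rightarrow> real" where
  "uuyy_int c a = (\<integral>z. u a z * u a z * (uy c z * uy c z) \<partial>N)"
definition uy_int :: "nat \<Rightarrow> real" where
  "uy_int c = (\<integral>z. uy c z \<partial>N)"
definition uy_sq_int :: "nat \<Rightarrow> real" where
  "uy_sq_int c = (\<integral>z. uy c z * uy c z \<partial>N)"

lemma integral_one: "(\<integral>z. 1 \<partial>N) = (1::real)"
  using prob_space.prob_space[OF prob_space_N] by simp

lemma factor_moment_off_diag: "k < m \<Longrightarrow> l < m \<Longrightarrow> k \<noteq> i \<Longrightarrow> k \<noteq> j \<Longrightarrow> factor_moment c i j k l = (if k = l then 1 else 0)"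
  unfolding factor_moment_def y_factor_def by (simp add: orthonormal)

lemma tail_moment_diag: "tail_moment c i i = (if m \<le> i \<and> i < n then uy_sq_int c else 1)"
proof -
  have "tail_moment c i i = (\<Prod>k\<in>{m..<n}. if k = i then uy_sq_int c else 1)"
    unfolding tail_moment_def y_factor_def uy_sq_int_def by (intro prod.cong refl) (simp add: integral_one del: lebesgue_integral_const)
  then show ?thesis by (simp add: prod.delta)
qed

lemma tail_moment_off_diag:
  assumes "i \<noteq> j"
  shows "tail_moment c i j = (if m \<le> i \<and> i < n then uy_int c else 1) * (if m \<le> j \<and> j < n then uy_int c else 1)"
proof -
  have "tail_moment c i j = (\<Prod>k\<in>{m..<n}. (if k = i then uy_int c else 1) * (if k = j then uy_int c else 1))"
    unfolding tail_moment_def y_factor_def uy_int_def using assms by (intro prod.cong refl) (auto simp: integral_one simp del: lebesgue_integral_const)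
  then show ?thesis by (simp add: prod.distrib prod.delta)
qed

definition pair_term :: "nat \<Rightarrow> nat \<Rightarrow> nat \<Rightarrow> real" where
  "pair_term c i j = (if i = j then (if i < m then uuyy_int c i else uy_sq_int c)
    else if i < m \<and> j < m then uuy_int c i i * uuy_int c j j - uuy_int c i j * uuy_int c j i
    else if i < m then uuy_int c i i * uy_int c
    else if j < m then uuy_int c j j * uy_int c
    else uy_int c * uy_int c)"

lemma moment_product_eq_pair_term:
  assumes i: "i < n" and j: "j < n"
  shows "leibniz_det m (factor_moment c i j) * tail_moment c i j = pair_term c i j"
proof -
  consider (diag) "i = j" | (both) "i \<noteq> j" "i < m" "j < m" | (left) "i \<noteq> j" "i < m" "\<not> j < m"
    | (right) "i \<noteq> j" "\<not> i < m" "j < m" | (none) "i \<noteq> j" "\<not> i < m" "\<not> j < m"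
    by blast
  then show ?thesis
  proof cases
    case diag
    have "leibniz_det m (factor_moment c i j) = (if i < m then factor_moment c i j i i else 1)"
      by (rule leibniz_det_identity_but_one) (use diag factor_moment_off_diag in auto)
    then show ?thesis
      using diag i tail_moment_diag[of c i] by (auto simp: pair_term_def factor_moment_def y_factor_def uuyy_int_def mult_ac)
  next
    case both
    have "leibniz_det m (factor_moment c i j) = factor_moment c i j i i * factor_moment c i j j j
        - factor_moment c i j i j * factor_moment c i j j i"
      by (rule leibniz_det_identity_but_two) (use both factor_moment_off_diag in auto)
    then show ?thesis using both tail_moment_off_diag[of i j c]
      by (auto simp: pair_term_def factor_moment_def y_factor_def uuy_int_def mult_ac)
  next
    case left
    have "leibniz_det m (factor_moment c i j) = factor_moment c i j i i"
      using leibniz_det_identity_but_one[of m i "factor_moment c i j"] left factor_moment_off_diag by auto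
    then show ?thesis using left j tail_moment_off_diag[of i j c]
      by (auto simp: pair_term_def factor_moment_def y_factor_def uuy_int_def mult_ac)
  next
    case right
    have "leibniz_det m (factor_moment c i j) = factor_moment c i j j j"
      using leibniz_det_identity_but_one[of m j "factor_moment c i j"] right factor_moment_off_diag by auto
    then show ?thesis using right i tail_moment_off_diag[of i j c]
      by (auto simp: pair_term_def factor_moment_def y_factor_def uuy_int_def mult_ac)
  next
    case none
    have "leibniz_det m (factor_moment c i j) = 1"
      using leibniz_det_identity_but_one[of m i "factor_moment c i j"] none factor_moment_off_diag by auto
    then show ?thesis using none i j tail_moment_off_diag[of i j c] by (auto simp: pair_term_def)
  qed
qed

lemma uuy_int_sym: "uuy_int c a b = uuy_int c b a"
  unfolding uuy_int_def by (simp add: mult_ac)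

lemma sum_if_eq_shift:
  fixes a :: real
  assumes "finite S" "i \<in> S"
  shows "(\<Sum>j\<in>S. if i = j then a else b j) = (\<Sum>j\<in>S. b j) + (a - b i)"
proof -
  have "(\<Sum>j\<in>S. if i = j then a else b j) = (\<Sum>j\<in>S. b j + (if i = j then a - b i else 0))"
    by (intro sum.cong refl) auto
  also have "\<dots> = (\<Sum>j\<in>S. b j) + (a - b i)"
    using assms by (simp add: sum.distrib)
  finally show ?thesis .
qed

lemma sum_split_at_m: "(\<Sum>i<n. F i) = (\<Sum>i<m. F i) + (\<Sum>i\<in>{m..<n}. (F i :: real))"
  using mn by (simp add: sum.atLeastLessThan_concat atLeast0LessThan[symmetric])

lemma double_sum_split_at_m:
  "(\<Sum>i<n. \<Sum>j<n. F i j) = (\<Sum>i<m. \<Sum>j<m. F i j) + (\<Sum>i<m. \<Sum>j\<in>{m..<n}. F i j)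
      + (\<Sum>i\<in>{m..<n}. \<Sum>j<m. F i j) + (\<Sum>i\<in>{m..<n}. \<Sum>j\<in>{m..<n}. (F i j :: real))"
  unfolding sum_split_at_m[of "F i" for i] sum.distrib
  by (simp add: sum_split_at_m[of "\<lambda>i. \<Sum>j<m. F i j"] sum_split_at_m[of "\<lambda>i. \<Sum>j\<in>{m..<n}. F i j"])

lemma sum_pair_term_head_head:
  "(\<Sum>i<m. \<Sum>j<m. pair_term c i j) = (\<Sum>i<m. uuyy_int c i) + (\<Sum>i<m. uuy_int c i i)^2 - (\<Sum>i<m. \<Sum>j<m. (uuy_int c i j)^2)"
proof -
  have "(\<Sum>i<m. \<Sum>j<m. pair_term c i j) = (\<Sum>i<m. \<Sum>j<m. if i = j then uuyy_int c i else uuy_int c i i * uuy_int c j j - uuy_int c i j * uuy_int c j i)"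
    unfolding pair_term_def by (intro sum.cong refl) auto
  also have "\<dots> = (\<Sum>i<m. (\<Sum>j<m. uuy_int c i i * uuy_int c j j - uuy_int c i j * uuy_int c j i) + (uuyy_int c i - (uuy_int c i i * uuy_int c i i - uuy_int c i i * uuy_int c i i)))"
    by (intro sum.cong refl sum_if_eq_shift) auto
  also have "\<dots> = (\<Sum>i<m. uuyy_int c i) + (\<Sum>i<m. uuy_int c i i)^2 - (\<Sum>i<m. \<Sum>j<m. (uuy_int c i j)^2)"
    by (simp add: sum.distrib sum_subtractf power2_eq_square sum_distrib_left sum_distrib_right uuy_int_sym[of c _ "_"]) (rule sum.swap)
  finally show ?thesis .
qed

lemma sum_pair_term_head_tail:
  "(\<Sum>i<m. \<Sum>j\<in>{m..<n}. pair_term c i j) = real (n - m) * (\<Sum>i<m. uuy_int c i i) * uy_int c"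
proof -
  have "(\<Sum>i<m. \<Sum>j\<in>{m..<n}. pair_term c i j) = (\<Sum>i<m. \<Sum>j\<in>{m..<n}. uuy_int c i i * uy_int c)"
    unfolding pair_term_def by (intro sum.cong refl) auto
  then show ?thesis using card_atLeastLessThan[of m n] by (simp add: sum_distrib_right sum_distrib_left[symmetric] mult_ac)
qed

lemma sum_pair_term_tail_head:
  "(\<Sum>i\<in>{m..<n}. \<Sum>j<m. pair_term c i j) = real (n - m) * (\<Sum>i<m. uuy_int c i i) * uy_int c"
proof -
  have "(\<Sum>i\<in>{m..<n}. \<Sum>j<m. pair_term c i j) = (\<Sum>i\<in>{m..<n}. \<Sum>j<m. uuy_int c j j * uy_int c)"
    unfolding pair_term_def by (intro sum.cong refl) auto
  then show ?thesis using card_atLeastLessThan[of m n] by (simp add: sum_distrib_right sum_distrib_left[symmetric] mult_ac)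
qed

lemma sum_pair_term_tail_tail:
  "(\<Sum>i\<in>{m..<n}. \<Sum>j\<in>{m..<n}. pair_term c i j) = real (n - m) * uy_sq_int c + real (n - m) * (real (n - m) - 1) * (uy_int c)^2"
proof -
  have "(\<Sum>i\<in>{m..<n}. \<Sum>j\<in>{m..<n}. pair_term c i j) = (\<Sum>i\<in>{m..<n}. \<Sum>j\<in>{m..<n}. if i = j then uy_sq_int c else uy_int c * uy_int c)"
    unfolding pair_term_def by (intro sum.cong refl) auto
  also have "\<dots> = (\<Sum>i\<in>{m..<n}. (\<Sum>j\<in>{m..<n}. uy_int c * uy_int c) + (uy_sq_int c - uy_int c * uy_int c))"
    by (intro sum.cong refl sum_if_eq_shift) auto
  also have "\<dots> = real (n - m) * uy_sq_int c + real (n - m) * (real (n - m) - 1) * (uy_int c)^2"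
    using card_atLeastLessThan[of m n] mn by (simp add: power2_eq_square algebra_simps of_nat_diff)
  finally show ?thesis .
qed

lemma sum_pair_term:
  "(\<Sum>i<n. \<Sum>j<n. pair_term c i j) =
     (\<Sum>i<m. uuyy_int c i) + real (n - m) * uy_sq_int c + (\<Sum>i<m. uuy_int c i i)^2 - (\<Sum>i<m. \<Sum>j<m. (uuy_int c i j)^2)
     + 2 * real (n - m) * (\<Sum>i<m. uuy_int c i i) * uy_int c + real (n - m) * (real (n - m) - 1) * (uy_int c)^2"
  unfolding double_sum_split_at_m sum_pair_term_head_head sum_pair_term_head_tail
    sum_pair_term_tail_head sum_pair_term_tail_tail by simp

definition sq_sum :: "(nat \<Rightarrow> 'a) \<Rightarrow> real" where
  "sq_sum x = (\<Sum>c<m. (\<Sum>i<n. uy c (x i))^2)"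

definition sample_matrix :: "(nat \<Rightarrow> 'a) \<Rightarrow> nat \<Rightarrow> nat \<Rightarrow> real" where
  "sample_matrix x i a = u a (x i)"

definition minor_term :: "(nat \<Rightarrow> nat) \<Rightarrow> (nat \<Rightarrow> 'a) \<Rightarrow> real" where
  "minor_term \<iota> x = sq_sum x * row_diag_prod m (sample_matrix x) \<iota> * row_minor m (sample_matrix x) \<iota>"

lemma minor_term_id_expansion:
  "minor_term id x =
   (\<Sum>c<m. \<Sum>i<n. \<Sum>j<n. \<Sum>\<sigma>\<in>{\<sigma>. \<sigma> permutes {..<m}}. of_int (sign \<sigma>) * sample_term \<sigma> c i j x)"
proof -
  have "row_diag_prod m (sample_matrix x) id * row_minor m (sample_matrix x) id
      = (\<Sum>\<sigma>\<in>{\<sigma>. \<sigma> permutes {..<m}}. of_int (sign \<sigma>) * (\<Prod>a<m. u a (x a) * u (\<sigma> a) (x a)))"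
    unfolding row_diag_prod_def row_minor_def leibniz_det_def sample_matrix_def
    by (simp add: sum_distrib_left prod.distrib mult_ac)
  then show ?thesis
    unfolding minor_term_def sq_sum_def power2_eq_square sum_product sample_term_def mult.assoc
      sum_distrib_right sum_distrib_left
    by (simp add: sum_distrib_left mult_ac)
qed

lemma component_meas: "k < n \<Longrightarrow> h \<in> borel_measurable N \<Longrightarrow> (\<lambda>x. h (x k)) \<in> borel_measurable PN"
  by (rule measurable_compose[OF measurable_component_singleton]) auto

lemma integral_quadruple_sum:
  fixes f :: "nat \<Rightarrow> nat \<Rightarrow> nat \<Rightarrow> (nat \<Rightarrow> nat) \<Rightarrow> (nat \<Rightarrow> 'a) \<Rightarrow> real"
  assumes I: "\<And>c i j \<sigma>. c < m \<Longrightarrow> i < n \<Longrightarrow> j < n \<Longrightarrow> \<sigma> \<in> P \<Longrightarrow> integrable PN (f c i j \<sigma>)"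
  shows "integrable PN (\<lambda>x. \<Sum>c<m. \<Sum>i<n. \<Sum>j<n. \<Sum>\<sigma>\<in>P. f c i j \<sigma> x)"
    and "(\<integral>x. (\<Sum>c<m. \<Sum>i<n. \<Sum>j<n. \<Sum>\<sigma>\<in>P. f c i j \<sigma> x) \<partial>PN) =
     (\<Sum>c<m. \<Sum>i<n. \<Sum>j<n. \<Sum>\<sigma>\<in>P. \<integral>x. f c i j \<sigma> x \<partial>PN)"
proof -
  have i3: "integrable PN (\<lambda>x. \<Sum>\<sigma>\<in>P. f c i j \<sigma> x)" if "c < m" "i < n" "j < n" for c i j
    using that I by (intro Bochner_Integration.integrable_sum) auto
  have i2: "integrable PN (\<lambda>x. \<Sum>j<n. \<Sum>\<sigma>\<in>P. f c i j \<sigma> x)" if "c < m" "i < n" for c i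
    by (rule Bochner_Integration.integrable_sum) (use that i3 in auto)
  have i1: "integrable PN (\<lambda>x. \<Sum>i<n. \<Sum>j<n. \<Sum>\<sigma>\<in>P. f c i j \<sigma> x)" if "c < m" for c
    by (rule Bochner_Integration.integrable_sum) (use that i2 in auto)
  show "integrable PN (\<lambda>x. \<Sum>c<m. \<Sum>i<n. \<Sum>j<n. \<Sum>\<sigma>\<in>P. f c i j \<sigma> x)"
    by (rule Bochner_Integration.integrable_sum) (use i1 in auto)
  show "(\<integral>x. (\<Sum>c<m. \<Sum>i<n. \<Sum>j<n. \<Sum>\<sigma>\<in>P. f c i j \<sigma> x) \<partial>PN) =
     (\<Sum>c<m. \<Sum>i<n. \<Sum>j<n. \<Sum>\<sigma>\<in>P. \<integral>x. f c i j \<sigma> x \<partial>PN)"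
    using i1 i2 i3 I by (simp add: Bochner_Integration.integral_sum)
qed

lemma integrable_minor_term_id: "integrable PN (minor_term id)"
  unfolding minor_term_id_expansion by (rule integral_quadruple_sum(1)) (auto intro: integrable_sample_term)

lemma integral_minor_term_id: "(\<integral>x. minor_term id x \<partial>PN) = (\<Sum>c<m. \<Sum>i<n. \<Sum>j<n. pair_term c i j)"
proof -
  have "(\<integral>x. minor_term id x \<partial>PN) =
     (\<Sum>c<m. \<Sum>i<n. \<Sum>j<n. \<Sum>\<sigma>\<in>{\<sigma>. \<sigma> permutes {..<m}}. \<integral>x. of_int (sign \<sigma>) * sample_term \<sigma> c i j x \<partial>PN)"
    unfolding minor_term_id_expansion by (rule integral_quadruple_sum(2)) (auto intro: integrable_sample_term)
  also have "\<dots> = (\<Sum>c<m. \<Sum>i<n. \<Sum>j<n. pair_term c i j)"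
    by (intro sum.cong refl) (simp add: signed_sum_integral_sample_term moment_product_eq_pair_term)
  finally show ?thesis .
qed

lemma distr_PN_permute:
  assumes "\<pi> permutes {..<n}"
  shows "(\<lambda>x. \<lambda>k\<in>{..<n}. x (\<pi> k)) \<in> measurable PN PN"
    and "distr PN PN (\<lambda>x. \<lambda>k\<in>{..<n}. x (\<pi> k)) = PN"
proof -
  have \<pi>n: "\<And>k. k < n \<Longrightarrow> \<pi> k < n" using assms permutes_less by blast
  show "(\<lambda>x. \<lambda>k\<in>{..<n}. x (\<pi> k)) \<in> measurable PN PN"
    using \<pi>n by (intro measurable_restrict measurable_component_singleton) auto
  show "distr PN PN (\<lambda>x. \<lambda>k\<in>{..<n}. x (\<pi> k)) = PN"
    using distr_PiM_reindex[of "{..<n}" "\<lambda>_. N" \<pi> "{..<n}"] prob_space_N \<pi>n permutes_inj_on[OF assms]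
    by auto
qed

lemma minor_term_permute:
  assumes \<pi>: "\<pi> permutes {..<n}" "\<And>a. a < m \<Longrightarrow> \<pi> a = \<iota> a"
  shows "minor_term id (\<lambda>k\<in>{..<n}. x (\<pi> k)) = minor_term \<iota> x"
proof -
  have "(\<Sum>i<n. uy c (x (\<pi> i))) = (\<Sum>i<n. uy c (x i))" for c
    using sum.reindex_bij_betw[OF permutes_imp_bij[OF \<pi>(1)], of "\<lambda>i. uy c (x i)"] by simp
  then have "sq_sum (\<lambda>k\<in>{..<n}. x (\<pi> k)) = sq_sum x"
    unfolding sq_sum_def by simp
  moreover have "row_diag_prod m (sample_matrix (\<lambda>k\<in>{..<n}. x (\<pi> k))) id = row_diag_prod m (sample_matrix x) \<iota>"
    unfolding row_diag_prod_def sample_matrix_def using mn \<pi>(2) by (intro prod.cong refl) auto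
  moreover have "row_minor m (sample_matrix (\<lambda>k\<in>{..<n}. x (\<pi> k))) id = row_minor m (sample_matrix x) \<iota>"
    unfolding row_minor_def leibniz_det_def sample_matrix_def using mn \<pi>(2)
    by (intro sum.cong prod.cong refl arg_cong2[where f="(*)"]) auto
  ultimately show ?thesis unfolding minor_term_def by simp
qed

lemma minor_term_inj:
  assumes \<iota>: "\<iota> \<in> PiE {..<m} (\<lambda>_. {..<n})" "inj_on \<iota> {..<m}"
  shows "integrable PN (minor_term \<iota>)"
    and "(\<integral>x. minor_term \<iota> x \<partial>PN) = (\<integral>x. minor_term id x \<partial>PN)"
proof -
  have "\<iota> ` {..<m} \<subseteq> {..<n}" using \<iota>(1) by (auto simp: PiE_def Pi_def)
  then obtain \<pi> where \<pi>: "\<pi> permutes {..<n}" "\<And>a. a < m \<Longrightarrow> \<pi> a = \<iota> a"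
    using inj_on_extends_to_permutes[OF \<iota>(2) _ mn] by blast
  let ?T = "\<lambda>x. \<lambda>k\<in>{..<n}. x (\<pi> k)"
  have H: "minor_term id \<in> borel_measurable PN"
    using integrable_minor_term_id by (rule borel_measurable_integrable)
  have "integrable (distr PN PN ?T) (minor_term id)"
    using integrable_minor_term_id distr_PN_permute(2)[OF \<pi>(1)] by simp
  then have "integrable PN (\<lambda>x. minor_term id (?T x))"
    using distr_PN_permute(1)[OF \<pi>(1)] H by (simp add: integrable_distr_eq)
  then show "integrable PN (minor_term \<iota>)"
    using minor_term_permute[OF \<pi>] by simp
  have "(\<integral>x. minor_term id x \<partial>PN) = (\<integral>x. minor_term id (?T x) \<partial>PN)"
    using integral_distr[OF distr_PN_permute(1)[OF \<pi>(1)] H] distr_PN_permute(2)[OF \<pi>(1)] by simp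
  then show "(\<integral>x. minor_term \<iota> x \<partial>PN) = (\<integral>x. minor_term id x \<partial>PN)"
    using minor_term_permute[OF \<pi>] by simp
qed

definition gram_det :: "(nat \<Rightarrow> 'a) \<Rightarrow> real" where
  "gram_det x = det (transpose_mat (mat n m (\<lambda>(i,a). sample_matrix x i a)) * mat n m (\<lambda>(i,a). sample_matrix x i a))"

definition pair_term_sum :: real where "pair_term_sum = (\<Sum>c<m. \<Sum>i<n. \<Sum>j<n. pair_term c i j)"

lemma gram_det_nonneg: "0 \<le> gram_det x"
  unfolding gram_det_def by (rule det_gram_nonneg)

lemma gram_det_inj_expansion: "gram_det x = (\<Sum>\<iota>\<in>{\<iota>\<in>PiE {..<m} (\<lambda>_. {..<n}). inj_on \<iota> {..<m}}. row_diag_prod m (sample_matrix x) \<iota> * row_minor m (sample_matrix x) \<iota>)"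
proof -
  have "gram_det x = (\<Sum>\<iota>\<in>PiE {..<m} (\<lambda>_. {..<n}). row_diag_prod m (sample_matrix x) \<iota> * row_minor m (sample_matrix x) \<iota>)"
    unfolding gram_det_def by (rule det_gram_expansion)
  also have "\<dots> = (\<Sum>\<iota>\<in>{\<iota>\<in>PiE {..<m} (\<lambda>_. {..<n}). inj_on \<iota> {..<m}}. row_diag_prod m (sample_matrix x) \<iota> * row_minor m (sample_matrix x) \<iota>)"
    by (rule sum.mono_neutral_right) (auto simp: row_minor_not_inj finite_PiE)
  finally show ?thesis .
qed

lemma integral_sq_sum_gram_det:
  shows "integrable PN (\<lambda>x. sq_sum x * gram_det x)"
    and "(\<integral>x. sq_sum x * gram_det x \<partial>PN) = fact n / fact (n - m) * pair_term_sum"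
proof -
  let ?I = "{\<iota>\<in>PiE {..<m} (\<lambda>_. {..<n}). inj_on \<iota> {..<m}}"
  have e: "sq_sum x * gram_det x = (\<Sum>\<iota>\<in>?I. minor_term \<iota> x)" for x
    unfolding gram_det_inj_expansion minor_term_def by (simp add: sum_distrib_left mult_ac)
  show "integrable PN (\<lambda>x. sq_sum x * gram_det x)"
    unfolding e by (rule Bochner_Integration.integrable_sum) (use minor_term_inj(1) in auto)
  have "(\<integral>x. sq_sum x * gram_det x \<partial>PN) = (\<Sum>\<iota>\<in>?I. \<integral>x. minor_term \<iota> x \<partial>PN)"
    unfolding e by (rule Bochner_Integration.integral_sum) (use minor_term_inj(1) in auto)
  also have "\<dots> = (\<Sum>\<iota>\<in>?I. pair_term_sum)"
    using minor_term_inj(2) integral_minor_term_id unfolding pair_term_sum_def by (intro sum.cong refl) auto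
  also have "\<dots> = fact n / fact (n - m) * pair_term_sum"
    using card_inj_PiE_lessThan[OF mn] by simp
  finally show "(\<integral>x. sq_sum x * gram_det x \<partial>PN) = fact n / fact (n - m) * pair_term_sum" .
qed

definition christoffel_uy_int :: "nat \<Rightarrow> real" where "christoffel_uy_int c = (\<integral>z. christoffel z * uy c z \<partial>N)"

lemma sum_uuy_int_diag: "c < m \<Longrightarrow> (\<Sum>i<m. uuy_int c i i) = christoffel_uy_int c"
proof -
  assume c: "c < m"
  have "(\<Sum>i<m. uuy_int c i i) = (\<integral>z. (\<Sum>i<m. u i z * u i z * uy c z) \<partial>N)"
    unfolding uuy_int_def by (rule Bochner_Integration.integral_sum[symmetric]) (use c integrable_uuy in auto)
  also have "\<dots> = christoffel_uy_int c" unfolding christoffel_uy_int_def christoffel_def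
    by (simp add: sum_distrib_right power2_eq_square)
  finally show ?thesis .
qed

lemma sum_uy_sq_int: "(\<Sum>c<m. uy_sq_int c) = (\<integral>z. christoffel z * (y z)^2 \<partial>N)"
proof -
  have "(\<Sum>c<m. uy_sq_int c) = (\<integral>z. (\<Sum>c<m. uy c z * uy c z) \<partial>N)"
    unfolding uy_sq_int_def
    by (rule Bochner_Integration.integral_sum[symmetric])
       (use integrable_uuyy[of _ _ _ _] in \<open>auto intro!: integrable_bounded_at[where C=B] bounded_at_uyuy\<close>)
  also have "\<dots> = (\<integral>z. christoffel z * (y z)^2 \<partial>N)" unfolding christoffel_def uy_def
    by (simp add: sum_distrib_right sum_distrib_left power2_eq_square mult_ac)
  finally show ?thesis .
qed

lemma sum_uuyy_int: "(\<Sum>c<m. \<Sum>i<m. uuyy_int c i) = (\<integral>z. christoffel z * christoffel z * (y z)^2 \<partial>N)"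
proof -
  have "(\<Sum>c<m. \<Sum>i<m. uuyy_int c i) = (\<Sum>c<m. \<integral>z. (\<Sum>i<m. u i z * u i z * (uy c z * uy c z)) \<partial>N)"
    unfolding uuyy_int_def
    by (intro sum.cong refl Bochner_Integration.integral_sum[symmetric]) (use integrable_uuyy in auto)
  also have "\<dots> = (\<integral>z. (\<Sum>c<m. \<Sum>i<m. u i z * u i z * (uy c z * uy c z)) \<partial>N)"
    by (rule Bochner_Integration.integral_sum[symmetric])
       (auto intro!: Bochner_Integration.integrable_sum integrable_uuyy)
  also have "\<dots> = (\<integral>z. christoffel z * christoffel z * (y z)^2 \<partial>N)" unfolding christoffel_def uy_def
    by (simp add: sum_distrib_right sum_distrib_left power2_eq_square mult_ac)
  finally show ?thesis .
qed

definition y_sq_int :: real where "y_sq_int = (\<integral>z. (y z)^2 \<partial>N)"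

lemma pair_term_sum_eq:
  "pair_term_sum = (\<integral>z. christoffel z * christoffel z * (y z)^2 \<partial>N)
       + real (n - m) * (\<integral>z. christoffel z * (y z)^2 \<partial>N) + (\<Sum>c<m. (christoffel_uy_int c)^2)
       - (\<Sum>c<m. \<Sum>i<m. \<Sum>j<m. (uuy_int c i j)^2) + 2 * real (n - m) * (\<Sum>c<m. christoffel_uy_int c * uy_int c)
       + real (n - m) * (real (n - m) - 1) * (\<Sum>c<m. (uy_int c)^2)"
proof -
  have "pair_term_sum = (\<Sum>c<m. (\<Sum>i<m. uuyy_int c i) + real (n - m) * uy_sq_int c + (christoffel_uy_int c)^2
     - (\<Sum>i<m. \<Sum>j<m. (uuy_int c i j)^2) + 2 * real (n - m) * christoffel_uy_int c * uy_int c
     + real (n - m) * (real (n - m) - 1) * (uy_int c)^2)"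
    unfolding pair_term_sum_def by (intro sum.cong refl) (simp add: sum_pair_term sum_uuy_int_diag)
  then show ?thesis
    unfolding sum_uuyy_int[symmetric] sum_uy_sq_int[symmetric]
    by (simp add: sum.distrib sum_subtractf sum_distrib_left mult_ac)
qed

lemma bessel_inequality:
  assumes h: "h \<in> borel_measurable N" "integrable N (\<lambda>z. (h z)^2)"
    and hu: "\<And>c. c < m \<Longrightarrow> integrable N (\<lambda>z. h z * u c z)"
  shows "(\<Sum>c<m. (\<integral>z. h z * u c z \<partial>N)^2) \<le> (\<integral>z. (h z)^2 \<partial>N)"
proof -
  define a where "a c = (\<integral>z. h z * u c z \<partial>N)" for c
  define p where "p z = (\<Sum>c<m. a c * u c z)" for z
  have pp_sum: "(p z)^2 = (\<Sum>c<m. \<Sum>d<m. a c * a d * (u c z * u d z))" for z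
    unfolding p_def power2_eq_square sum_product by (simp add: mult_ac)
  have int_p2: "integrable N (\<lambda>z. (p z)^2)"
    unfolding pp_sum by (intro Bochner_Integration.integrable_sum integrable_mult_right integrable_uu) auto
  have hp_sum: "h z * p z = (\<Sum>c<m. a c * (h z * u c z))" for z
    unfolding p_def sum_distrib_left by (simp add: mult_ac)
  have int_hp: "integrable N (\<lambda>z. h z * p z)"
    unfolding hp_sum by (intro Bochner_Integration.integrable_sum integrable_mult_right hu) auto
  have "(\<integral>z. h z * p z \<partial>N) = (\<Sum>c<m. \<integral>z. a c * (h z * u c z) \<partial>N)"
    unfolding hp_sum by (intro Bochner_Integration.integral_sum integrable_mult_right hu) auto
  then have hp: "(\<integral>z. h z * p z \<partial>N) = (\<Sum>c<m. (a c)^2)"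
    by (simp add: a_def power2_eq_square)
  have "(\<integral>z. (p z)^2 \<partial>N) = (\<Sum>c<m. \<integral>z. (\<Sum>d<m. a c * a d * (u c z * u d z)) \<partial>N)"
    unfolding pp_sum
    by (intro Bochner_Integration.integral_sum Bochner_Integration.integrable_sum integrable_mult_right integrable_uu) auto
  also have "\<dots> = (\<Sum>c<m. \<Sum>d<m. a c * a d * (\<integral>z. u c z * u d z \<partial>N))"
    by (intro sum.cong refl, subst Bochner_Integration.integral_sum) (auto intro!: integrable_mult_right integrable_uu)
  also have "\<dots> = (\<Sum>c<m. (a c)^2)"
    by (simp add: orthonormal power2_eq_square if_distrib sum.delta cong: if_cong)
  finally have pp: "(\<integral>z. (p z)^2 \<partial>N) = (\<Sum>c<m. (a c)^2)" .
  have "0 \<le> (\<integral>z. (h z - p z)^2 \<partial>N)" by (intro integral_nonneg_AE) auto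
  also have "\<dots> = (\<integral>z. (h z)^2 - 2 * (h z * p z) + (p z)^2 \<partial>N)"
    by (simp add: power2_diff algebra_simps)
  also have "\<dots> = (\<integral>z. (h z)^2 \<partial>N) - 2 * (\<integral>z. h z * p z \<partial>N) + (\<integral>z. (p z)^2 \<partial>N)"
    using h(2) int_hp int_p2 by simp
  finally show ?thesis unfolding hp pp a_def by simp
qed

lemma christoffel_uy_int_sq_le:
  "(\<Sum>c<m. (christoffel_uy_int c)^2) \<le> (\<integral>z. christoffel z * christoffel z * (y z)^2 \<partial>N)"
proof -
  have "(\<Sum>c<m. (\<integral>z. christoffel z * y z * u c z \<partial>N)^2) \<le> (\<integral>z. (christoffel z * y z)^2 \<partial>N)"
    using integrable_christoffel2_y2 integrable_christoffel_uy
    by (intro bessel_inequality) (simp_all add: power2_eq_square uy_def mult_ac)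
  then show ?thesis
    unfolding christoffel_uy_int_def uy_def by (simp add: power2_eq_square mult_ac)
qed

lemma integral_christoffel_sq_y_sq_le:
  "(\<integral>z. christoffel z * christoffel z * (y z)^2 \<partial>N) \<le> B * B * y_sq_int"
proof -
  have "AE z in N. christoffel z * christoffel z * (y z)^2 \<le> B * B * (y z)^2"
    using AE_bounded_at
  proof (rule eventually_mono)
    fix z assume "bounded_at z"
    then have "christoffel z * christoffel z \<le> B * B"
      using christoffel_nonneg B_ge_1 by (intro mult_mono) (auto simp: bounded_at_def)
    then show "christoffel z * christoffel z * (y z)^2 \<le> B * B * (y z)^2" by (intro mult_right_mono) auto
  qed
  then show ?thesis
    unfolding y_sq_int_def using integrable_christoffel2_y2 y_sq_integrable
    by (subst integral_mult_right_zero[symmetric]) (intro integral_mono_AE, auto)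
qed

lemma integral_christoffel_y_sq_le: "(\<integral>z. christoffel z * (y z)^2 \<partial>N) \<le> B * y_sq_int"
proof -
  have "AE z in N. christoffel z * (y z)^2 \<le> B * (y z)^2"
    using AE_bounded_at by (rule eventually_mono) (auto simp: bounded_at_def intro: mult_right_mono)
  then show ?thesis
    unfolding y_sq_int_def using integrable_christoffel_y2 y_sq_integrable
    by (subst integral_mult_right_zero[symmetric]) (intro integral_mono_AE, auto)
qed

lemma pair_term_sum_le:
  "pair_term_sum \<le> B * (B + real (n - m)) * y_sq_int + (\<Sum>c<m. (christoffel_uy_int c)^2)
      + 2 * real (n - m) * (\<Sum>c<m. christoffel_uy_int c * uy_int c)
      + real (n - m) * (real (n - m) - 1) * (\<Sum>c<m. (uy_int c)^2)"
proof -
  have "real (n - m) * (\<integral>z. christoffel z * (y z)^2 \<partial>N) \<le> real (n - m) * (B * y_sq_int)"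
    using integral_christoffel_y_sq_le by (intro mult_left_mono) auto
  moreover have "0 \<le> (\<Sum>c<m. \<Sum>i<m. \<Sum>j<m. (uuy_int c i j)^2)" by (intro sum_nonneg) auto
  ultimately show ?thesis
    using pair_term_sum_eq integral_christoffel_sq_y_sq_le by (simp add: algebra_simps)
qed

lemma sum_uy_int_sq_nonneg: "0 \<le> (\<Sum>c<m. (uy_int c)^2)" by (intro sum_nonneg) auto

lemma pair_term_sum_bound:
  assumes m0: "0 < m"
  shows "pair_term_sum \<le> B * (B + real (n - m)) * y_sq_int + real n * (B * B) * y_sq_int + (real n)^2 * (\<Sum>c<m. (uy_int c)^2)"
proof -
  define d where "d = real (n - m)"
  define A where "A = (\<Sum>c<m. (christoffel_uy_int c)^2)"
  define P where "P = (\<Sum>c<m. (uy_int c)^2)"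
  define X where "X = (\<Sum>c<m. christoffel_uy_int c * uy_int c)"
  have Wb: "pair_term_sum \<le> B * (B + d) * y_sq_int + A + 2 * d * X + d * (d - 1) * P"
    using pair_term_sum_le unfolding d_def A_def P_def X_def .
  have A: "A \<le> B * B * y_sq_int" using christoffel_uy_int_sq_le integral_christoffel_sq_y_sq_le unfolding A_def by simp
  have X: "2 * X \<le> A + P"
  proof -
    have "2 * X = (\<Sum>c<m. 2 * (christoffel_uy_int c * uy_int c))" unfolding X_def by (simp add: sum_distrib_left)
    also have "\<dots> \<le> (\<Sum>c<m. (christoffel_uy_int c)^2 + (uy_int c)^2)"
      using sum_squares_bound by (intro sum_mono) (simp add: mult.assoc)
    finally show ?thesis unfolding A_def P_def by (simp add: sum.distrib)
  qed
  have d0: "0 \<le> d" unfolding d_def by simp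
  have dn: "1 + d \<le> real n" using m0 mn unfolding d_def by (simp add: of_nat_diff)
  have dn2: "d * d \<le> real n * real n" using mn unfolding d_def by (intro mult_mono) auto
  have P0: "0 \<le> P" unfolding P_def by (rule sum_uy_int_sq_nonneg)
  have A0: "0 \<le> A" unfolding A_def by (intro sum_nonneg) auto
  have dX: "2 * d * X \<le> d * A + d * P"
  proof -
    have "d * (2 * X) \<le> d * (A + P)" using X d0 by (rule mult_left_mono)
    then show ?thesis by (simp add: algebra_simps)
  qed
  have e1: "(1 + d) * A \<le> real n * (B * B * y_sq_int)"
    using A dn d0 A0 by (intro mult_mono) auto
  have e2: "(d * d) * P \<le> (real n * real n) * P" using dn2 P0 by (rule mult_right_mono)
  have e3: "d * (d - 1) * P = d * d * P - d * P" by (simp add: algebra_simps)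
  have "pair_term_sum \<le> B * (B + d) * y_sq_int + real n * (B * B * y_sq_int) + (real n * real n) * P"
    using Wb dX e1 e2 e3 by (simp add: algebra_simps)
  then show ?thesis unfolding d_def P_def by (simp add: power2_eq_square mult_ac)
qed

lemma pair_term_sum_bound_constant_christoffel:
  assumes Km: "AE z in N. christoffel z = real m"
  shows "pair_term_sum \<le> B * (B + real (n - m)) * y_sq_int + (real n)^2 * (\<Sum>c<m. (uy_int c)^2)"
proof -
  define d where "d = real (n - m)"
  define P where "P = (\<Sum>c<m. (uy_int c)^2)"
  have a: "christoffel_uy_int c = real m * uy_int c" if "c < m" for c
  proof -
    have "christoffel_uy_int c = (\<integral>z. real m * uy c z \<partial>N)" unfolding christoffel_uy_int_def
      by (rule integral_cong_AE) (use Km in auto)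
    then show ?thesis unfolding uy_int_def by simp
  qed
  have A: "(\<Sum>c<m. (christoffel_uy_int c)^2) = real m * real m * P"
    unfolding P_def by (simp add: a sum_distrib_left power2_eq_square mult_ac)
  have X: "(\<Sum>c<m. christoffel_uy_int c * uy_int c) = real m * P"
    unfolding P_def by (simp add: a sum_distrib_left power2_eq_square mult_ac)
  have Wb: "pair_term_sum \<le> B * (B + d) * y_sq_int + real m * real m * P + 2 * d * (real m * P) + d * (d - 1) * P"
    using pair_term_sum_le unfolding A X d_def P_def .
  have nd: "real n = real m + d" using mn unfolding d_def by (simp add: of_nat_diff)
  have P0: "0 \<le> P" unfolding P_def by (rule sum_uy_int_sq_nonneg)
  have d0: "0 \<le> d" unfolding d_def by simp
  have "real m * real m * P + 2 * d * (real m * P) + d * (d - 1) * P = (real n * real n) * P - d * P"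
    unfolding nd by (simp add: algebra_simps)
  moreover have "0 \<le> d * P" using d0 P0 by simp
  ultimately have "pair_term_sum \<le> B * (B + d) * y_sq_int + (real n * real n) * P" using Wb by linarith
  then show ?thesis unfolding d_def P_def by (simp add: power2_eq_square)
qed

lemma christoffel_uy_int_le_nonneg:
  assumes pos: "AE z in N. \<forall>c<m. 0 \<le> uy c z" and c: "c < m"
  shows "0 \<le> uy_int c" and "0 \<le> christoffel_uy_int c" and "christoffel_uy_int c \<le> B * uy_int c"
proof -
  show "0 \<le> uy_int c"
    unfolding uy_int_def by (rule integral_nonneg_AE) (use pos c in auto)
  show "0 \<le> christoffel_uy_int c"
    unfolding christoffel_uy_int_def by (rule integral_nonneg_AE) (use pos c christoffel_nonneg in auto)
  have "AE z in N. christoffel z * uy c z \<le> B * uy c z"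
    using AE_bounded_at pos by eventually_elim (use c in \<open>auto simp: bounded_at_def intro: mult_right_mono\<close>)
  then have "christoffel_uy_int c \<le> (\<integral>z. B * uy c z \<partial>N)"
    unfolding christoffel_uy_int_def using integrable_christoffel_uy[OF c] integrable_uy[OF c]
    by (intro integral_mono_AE) auto
  then show "christoffel_uy_int c \<le> B * uy_int c" unfolding uy_int_def by simp
qed

lemma pair_term_sum_bound_nonneg:
  assumes pos: "AE z in N. \<forall>c<m. 0 \<le> uy c z"
  shows "pair_term_sum \<le> B * (B + real (n - m)) * y_sq_int + (B + real (n - m))^2 * (\<Sum>c<m. (uy_int c)^2)"
proof -
  define d where "d = real (n - m)"
  define P where "P = (\<Sum>c<m. (uy_int c)^2)"
  note bounds = christoffel_uy_int_le_nonneg[OF pos]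
  have "(\<Sum>c<m. (christoffel_uy_int c)^2) \<le> (\<Sum>c<m. (B * uy_int c)^2)"
    using bounds by (intro sum_mono power_mono) auto
  then have A: "(\<Sum>c<m. (christoffel_uy_int c)^2) \<le> B * B * P"
    unfolding P_def by (simp add: power_mult_distrib sum_distrib_left power2_eq_square mult_ac)
  have "(\<Sum>c<m. christoffel_uy_int c * uy_int c) \<le> (\<Sum>c<m. B * uy_int c * uy_int c)"
    using bounds by (intro sum_mono mult_right_mono) auto
  then have "2 * d * (\<Sum>c<m. christoffel_uy_int c * uy_int c) \<le> 2 * d * (B * P)"
    unfolding P_def d_def by (intro mult_left_mono) (auto simp: sum_distrib_left power2_eq_square mult_ac)
  moreover have "0 \<le> d * P" unfolding d_def P_def by (simp add: sum_nonneg)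
  moreover have "B * B * P + 2 * d * (B * P) + d * (d - 1) * P = (B + d)^2 * P - d * P"
    by (simp add: power2_eq_square algebra_simps)
  ultimately show ?thesis
    using pair_term_sum_le A unfolding d_def[symmetric] P_def[symmetric] by linarith
qed

lemma sq_sum_meas[measurable]: "sq_sum \<in> borel_measurable PN"
  unfolding sq_sum_def by (intro borel_measurable_sum borel_measurable_power component_meas) auto

lemma gram_det_meas: "gram_det \<in> borel_measurable PN"
proof -
  have e: "gram_det = (\<lambda>x. \<Sum>\<iota>\<in>PiE {..<m} (\<lambda>_. {..<n}). row_diag_prod m (sample_matrix x) \<iota> * row_minor m (sample_matrix x) \<iota>)"
    unfolding gram_det_def by (intro ext det_gram_expansion)
  have "(\<lambda>x. row_diag_prod m (sample_matrix x) \<iota> * row_minor m (sample_matrix x) \<iota>) \<in> borel_measurable PN" if \<iota>: "\<iota> \<in> PiE {..<m} (\<lambda>_. {..<n})" for \<iota>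
  proof -
    have lt: "\<And>a. a < m \<Longrightarrow> \<iota> a < n" using \<iota> by (auto simp: PiE_def Pi_def)
    have cm: "\<And>a h. a < m \<Longrightarrow> h \<in> borel_measurable N \<Longrightarrow> (\<lambda>x. h (x (\<iota> a))) \<in> borel_measurable PN"
      using component_meas lt by blast
    have p1: "(\<lambda>x. \<Prod>a<m. u a (x (\<iota> a))) \<in> borel_measurable PN"
      by (rule borel_measurable_prod) (simp add: cm)
    have p2: "(\<lambda>x. \<Prod>a<m. u (\<sigma> a) (x (\<iota> a))) \<in> borel_measurable PN" for \<sigma>
      by (rule borel_measurable_prod) (simp add: cm)
    have p3: "(\<lambda>x. \<Sum>\<sigma>\<in>{\<sigma>. \<sigma> permutes {..<m}}. of_int (sign \<sigma>) * (\<Prod>a<m. u (\<sigma> a) (x (\<iota> a)))) \<in> borel_measurable PN"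
      by (rule borel_measurable_sum) (rule borel_measurable_times[OF borel_measurable_const p2])
    show ?thesis unfolding row_diag_prod_def row_minor_def leibniz_det_def sample_matrix_def
      using p1 p3 by (rule borel_measurable_times)
  qed
  then show ?thesis unfolding e by (intro borel_measurable_sum) auto
qed

lemma expectation_eq_pair_term_sum:
  "(\<integral>\<^sup>+ x. ennreal (sq_sum x / (real n)^2) \<partial>density PN (\<lambda>x. ennreal (fact (n - m) / fact n * gram_det x)))
    = ennreal (pair_term_sum / (real n)^2)"
proof -
  let ?c = "fact (n - m) / fact n :: real"
  have c0: "0 \<le> ?c" by simp
  note gram_det_meas[measurable]
  have m1: "(\<lambda>x. ennreal (?c * gram_det x)) \<in> borel_measurable PN" by measurable
  have m2: "(\<lambda>x. ennreal (sq_sum x / (real n)^2)) \<in> borel_measurable PN" by measurable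
  have "(\<integral>\<^sup>+ x. ennreal (sq_sum x / (real n)^2) \<partial>density PN (\<lambda>x. ennreal (?c * gram_det x)))
      = (\<integral>\<^sup>+ x. ennreal (?c * gram_det x) * ennreal (sq_sum x / (real n)^2) \<partial>PN)"
    by (rule nn_integral_density[OF m1 m2])
  also have "\<dots> = (\<integral>\<^sup>+ x. ennreal (?c / (real n)^2 * (sq_sum x * gram_det x)) \<partial>PN)"
  proof (intro nn_integral_cong)
    fix x
    have "0 \<le> ?c * gram_det x" using c0 gram_det_nonneg by simp
    then have "ennreal (?c * gram_det x) * ennreal (sq_sum x / (real n)^2) = ennreal (?c * gram_det x * (sq_sum x / (real n)^2))"
      by (rule ennreal_mult'[symmetric])
    also have "?c * gram_det x * (sq_sum x / (real n)^2) = ?c / (real n)^2 * (sq_sum x * gram_det x)"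
      by (simp add: field_simps)
    finally show "ennreal (?c * gram_det x) * ennreal (sq_sum x / (real n)^2) = ennreal (?c / (real n)^2 * (sq_sum x * gram_det x))" .
  qed
  also have "\<dots> = ennreal (\<integral>x. ?c / (real n)^2 * (sq_sum x * gram_det x) \<partial>PN)"
  proof (rule nn_integral_eq_integral)
    show "integrable PN (\<lambda>x. ?c / (real n)^2 * (sq_sum x * gram_det x))" using integral_sq_sum_gram_det(1) by simp
    have "0 \<le> sq_sum x" for x unfolding sq_sum_def by (intro sum_nonneg) auto
    then show "AE x in PN. 0 \<le> ?c / (real n)^2 * (sq_sum x * gram_det x)" using gram_det_nonneg by simp
  qed
  also have "(\<integral>x. ?c / (real n)^2 * (sq_sum x * gram_det x) \<partial>PN) = pair_term_sum / (real n)^2"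
    using integral_sq_sum_gram_det(2) by simp
  finally show ?thesis .
qed

end


lemma oversampled_square_le:
  fixes a m n :: real
  assumes a: "0 < a" "a \<le> 1" and mn: "0 \<le> m" "m \<le> n"
  shows "(m / a + (n - m))^2 \<le> n^2 * (1 + 2 * (1 / a)^2 * (m / n))"
proof -
  define k where "k = 1 / a"
  have k1: "1 \<le> k" unfolding k_def using a by simp
  have "(m / a + (n - m))^2 = n^2 + 2 * n * m * (k - 1) + m * m * (k - 1)^2"
    unfolding k_def using a by (simp add: power2_eq_square field_simps)
  also have "\<dots> \<le> n^2 + 2 * n * m * (k - 1) + n * m * (k - 1)^2"
    using mn mult_right_mono[OF mn(2) mn(1)] by (intro add_left_mono mult_right_mono) auto
  also have "\<dots> = n^2 + n * m * (k^2 - 1)" by (simp add: power2_eq_square algebra_simps)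
  also have "\<dots> \<le> n^2 + n * m * (2 * k^2)"
  proof -
    have "k^2 - 1 \<le> 2 * k^2" using zero_le_power2[of k] by linarith
    then show ?thesis using mn by (intro add_left_mono mult_left_mono) auto
  qed
  also have "\<dots> = n^2 * (1 + 2 * k^2 * (m / n))"
    by (cases "n = 0") (simp_all add: field_simps power2_eq_square)
  finally show ?thesis unfolding k_def .
qed

locale weighted_sampling =
  fixes M :: "'a measure" and n m :: nat and phi :: "nat \<Rightarrow> 'a \<Rightarrow> real"
    and w f :: "'a \<Rightarrow> real" and \<alpha> :: real
  assumes M_prob: "prob_space M"
    and m_pos: "0 < m" and nm: "m \<le> n"
    and phi_meas[measurable]: "\<And>k. k < m \<Longrightarrow> phi k \<in> borel_measurable M"
    and phi_L2: "\<And>k. k < m \<Longrightarrow> integrable M (\<lambda>x. (phi k x)^2)"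
    and phi_orth: "\<And>k l. k < m \<Longrightarrow> l < m \<Longrightarrow>
         (\<integral>x. phi k x * phi l x \<partial>M) = (if k = l then 1 else 0)"
    and w_meas[measurable]: "w \<in> borel_measurable M"
    and w_nonneg: "\<And>x. x \<in> space M \<Longrightarrow> 0 \<le> w x"
    and w_int: "integrable M w" and w_one: "(\<integral>x. w x \<partial>M) = 1"
    and alpha: "0 < \<alpha>" "\<alpha> \<le> 1"
    and w_ge: "AE x in M. \<alpha> * wm m phi x \<le> w x"
    and f_meas[measurable]: "f \<in> borel_measurable M"
    and f_L2: "integrable M (\<lambda>x. (f x)^2)"
begin

definition nu :: "'a measure" where "nu = density M (\<lambda>x. ennreal (w x))"

text \<open>Where \<open>w\<close> vanishes the quotients below are \<open>0\<close> (division by zero); this is harmless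
  because the \<open>\<phi>\<^sub>k\<close> vanish there too and \<open>y\<close> only enters through integrals against \<open>\<nu>\<close>.\<close>

definition u :: "nat \<Rightarrow> 'a \<Rightarrow> real" where
  "u a z = (if a < m then phi a z / sqrt (w z) else 0)"

definition y :: "'a \<Rightarrow> real" where "y z = f z / sqrt (w z)"

definition B :: real where "B = real m / \<alpha>"

lemma wm_nonneg: "0 \<le> wm m phi x"
  unfolding wm_def by (intro divide_nonneg_nonneg sum_nonneg) auto

lemma AE_w_nonneg: "AE z in M. 0 \<le> w z"
  using w_nonneg by (intro AE_I2) auto

lemma AE_phi_zero_where_w_zero: "AE x in M. w x = 0 \<longrightarrow> (\<forall>k<m. phi k x = 0)"
  using w_ge
proof (rule eventually_mono, intro impI allI)
  fix x k assume "\<alpha> * wm m phi x \<le> w x" "w x = 0" "k < m"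
  then have "wm m phi x = 0" using wm_nonneg[of x] alpha by (simp add: mult_le_0_iff)
  then have "\<forall>k\<in>{..<m}. (phi k x)^2 = 0" using m_pos unfolding wm_def by (simp add: sum_nonneg_eq_0_iff)
  then show "phi k x = 0" using \<open>k < m\<close> by simp
qed

lemma AE_density_w: "(AE z in nu. P z) \<longleftrightarrow> (AE z in M. 0 < w z \<longrightarrow> P z)"
  unfolding nu_def by (subst AE_density) auto

lemma integral_nu: "(\<integral>z. h z \<partial>nu) = (\<integral>z. w z * h z \<partial>M)"
  if "h \<in> borel_measurable M" for h :: "'a \<Rightarrow> real"
  unfolding nu_def using that AE_w_nonneg by (subst integral_density) auto

lemma w_times_quotients: "AE z in M. w z * (p z / sqrt (w z) * (q z / sqrt (w z))) = p z * q z"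
  if "AE z in M. w z = 0 \<longrightarrow> p z = 0" for p q :: "'a \<Rightarrow> real"
  using that AE_w_nonneg
proof eventually_elim
  fix z assume "w z = 0 \<longrightarrow> p z = 0" "0 \<le> w z"
  then show "w z * (p z / sqrt (w z) * (q z / sqrt (w z))) = p z * q z"
  proof (cases "w z = 0")
    case False
    then have "sqrt (w z) * sqrt (w z) = w z" "sqrt (w z) \<noteq> 0" using \<open>0 \<le> w z\<close> by auto
    then show ?thesis by (simp add: field_simps)
  qed simp
qed

lemma prob_space_nu: "prob_space nu"
proof (rule prob_spaceI)
  have "emeasure nu (space nu) = (\<integral>\<^sup>+ x. ennreal (w x) \<partial>M)"
    unfolding nu_def by (simp add: emeasure_density nn_integral_set_ennreal[symmetric])
  also have "\<dots> = ennreal (\<integral>x. w x \<partial>M)"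
    using w_int w_nonneg by (intro nn_integral_eq_integral) auto
  finally show "emeasure nu (space nu) = 1" using w_one by simp
qed

lemma u_meas[measurable]: "u a \<in> borel_measurable nu"
  unfolding nu_def u_def by (cases "a < m") simp_all

lemma y_meas[measurable]: "y \<in> borel_measurable nu"
  unfolding nu_def y_def by simp

lemma u_orthonormal:
  assumes "a < m" "b < m"
  shows "(\<integral>z. u a z * u b z \<partial>nu) = (if a = b then 1 else 0)"
proof -
  have "(\<integral>z. u a z * u b z \<partial>nu) = (\<integral>z. w z * (u a z * u b z) \<partial>M)"
    using assms by (intro integral_nu) (simp add: u_def)
  also have "\<dots> = (\<integral>z. phi a z * phi b z \<partial>M)"
  proof (rule integral_cong_AE)
    have "AE z in M. w z = 0 \<longrightarrow> phi a z = 0"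
      using AE_phi_zero_where_w_zero by eventually_elim (use assms in auto)
    then have "AE z in M. w z * (phi a z / sqrt (w z) * (phi b z / sqrt (w z))) = phi a z * phi b z"
      by (rule w_times_quotients)
    then show "AE z in M. w z * (u a z * u b z) = phi a z * phi b z"
      by (simp only: u_def assms if_True)
  qed (use assms in \<open>simp_all add: u_def\<close>)
  finally show ?thesis using phi_orth[OF assms] by simp
qed

lemma christoffel_u: "0 < w z \<Longrightarrow> (\<Sum>a<m. (u a z)^2) = real m * wm m phi z / w z"
  using m_pos unfolding u_def wm_def by (simp add: power_divide sum_divide_distrib[symmetric])

lemma AE_christoffel_u_le: "AE z in nu. (\<Sum>a<m. (u a z)^2) \<le> B"
  unfolding AE_density_w using w_ge
proof (rule eventually_mono, intro impI)
  fix z assume a: "\<alpha> * wm m phi z \<le> w z" and wp: "0 < w z"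
  then have "real m * wm m phi z * \<alpha> \<le> real m * w z"
    using mult_left_mono[OF a, of "real m"] by (simp add: mult_ac)
  then show "(\<Sum>a<m. (u a z)^2) \<le> B"
    unfolding christoffel_u[OF wp] B_def using wp alpha by (simp add: field_simps)
qed

lemma one_le_B: "1 \<le> B"
  unfolding B_def using alpha m_pos by (simp add: field_simps)

lemma w_y_sq_le: "AE z in M. w z * (y z)^2 \<le> (f z)^2"
  using AE_w_nonneg
proof (rule eventually_mono)
  fix z assume "0 \<le> w z"
  then show "w z * (y z)^2 \<le> (f z)^2"
    by (cases "w z = 0") (simp_all add: y_def power_divide)
qed

lemma integrable_w_y_sq: "integrable M (\<lambda>z. w z * (y z)^2)"
proof (rule Bochner_Integration.integrable_bound[OF f_L2])
  show "AE z in M. norm (w z * (y z)^2) \<le> norm ((f z)^2)"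
    using w_y_sq_le AE_w_nonneg by eventually_elim simp
qed (simp add: y_def)

lemma integrable_y_sq: "integrable nu (\<lambda>z. (y z)^2)"
  using integrable_w_y_sq AE_w_nonneg unfolding nu_def
  by (subst integrable_density) (auto simp: y_def)

sublocale orthonormal_sampling nu m n u y B
  using prob_space_nu u_meas y_meas u_orthonormal AE_christoffel_u_le one_le_B integrable_y_sq nm
  by (rule orthonormal_sampling.intro)


lemma Phi_w_eq_sample_matrix: "Phi_w n m phi w xs = mat n m (\<lambda>(i,a). sample_matrix xs i a)"
  unfolding Phi_w_def sample_matrix_def by (rule eq_matI) (auto simp: u_def)

lemma gamma_n_eq: "gamma_n M n m phi w = density PN (\<lambda>x. ennreal (fact (n - m) / fact n * gram_det x))"
  unfolding gamma_n_def Phi_w_eq_sample_matrix gram_det_def nu_def by simp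

lemma sqnorm2_eq_sq_sum:
  "sqnorm2 ((1 / real n) \<cdot>\<^sub>v (transpose_mat (Phi_w n m phi w xs) *\<^sub>v fw_vec n f w xs))
     = sq_sum xs / (real n)^2"
proof -
  have "sqnorm2 ((1 / real n) \<cdot>\<^sub>v (transpose_mat (Phi_w n m phi w xs) *\<^sub>v fw_vec n f w xs))
     = (\<Sum>k<m. ((1 / real n) * (\<Sum>i<n. uy k (xs i)))^2)"
    unfolding sqnorm2_def
    by (intro sum.cong) (simp_all add: Phi_w_def fw_vec_def scalar_prod_def uy_def u_def y_def atLeast0LessThan)
  also have "\<dots> = sq_sum xs / (real n)^2"
    unfolding sq_sum_def sum_divide_distrib by (simp add: power_divide)
  finally show ?thesis .
qed

lemma expectation_eq:
  "(\<integral>\<^sup>+ xs. ennreal (sqnorm2 ((1 / real n) \<cdot>\<^sub>v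
      (transpose_mat (Phi_w n m phi w xs) *\<^sub>v fw_vec n f w xs))) \<partial>gamma_n M n m phi w)
   = ennreal (pair_term_sum / (real n)^2)"
  unfolding sqnorm2_eq_sq_sum gamma_n_eq by (rule expectation_eq_pair_term_sum)

lemma y_sq_int_le_L2sq: "y_sq_int \<le> L2sq M f"
proof -
  have "y_sq_int = (\<integral>z. w z * (y z)^2 \<partial>M)"
    unfolding y_sq_int_def by (rule integral_nu) (simp add: y_def)
  also have "\<dots> \<le> (\<integral>z. (f z)^2 \<partial>M)"
    by (rule integral_mono_AE[OF integrable_w_y_sq f_L2 w_y_sq_le])
  finally show ?thesis unfolding L2sq_def .
qed

lemma uy_int_eq_coefficient: "c < m \<Longrightarrow> uy_int c = (\<integral>z. f z * phi c z \<partial>M)"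
proof -
  assume c: "c < m"
  note [measurable] = phi_meas[OF c]
  have "uy_int c = (\<integral>z. w z * (u c z * y z) \<partial>M)"
    unfolding uy_int_def uy_def by (rule integral_nu) (simp add: u_def y_def c)
  also have "\<dots> = (\<integral>z. phi c z * f z \<partial>M)"
  proof (rule integral_cong_AE)
    have "AE z in M. w z = 0 \<longrightarrow> phi c z = 0"
      using AE_phi_zero_where_w_zero by eventually_elim (use c in auto)
    then have "AE z in M. w z * (phi c z / sqrt (w z) * (f z / sqrt (w z))) = phi c z * f z"
      by (rule w_times_quotients)
    then show "AE z in M. w z * (u c z * y z) = phi c z * f z"
      by (simp only: u_def y_def c if_True)
  qed (simp_all add: u_def y_def)
  finally show ?thesis by (simp add: mult.commute)
qed

lemma integrable_phi_phi: "k < m \<Longrightarrow> l < m \<Longrightarrow> integrable M (\<lambda>z. phi k z * phi l z)"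
proof (rule Bochner_Integration.integrable_bound)
  assume "k < m" "l < m"
  then show "integrable M (\<lambda>z. (phi k z)^2 + (phi l z)^2)" using phi_L2 by auto
  have "\<bar>phi k z * phi l z\<bar> \<le> (phi k z)^2 + (phi l z)^2" for z
  proof -
    have "2 * (\<bar>phi k z\<bar> * \<bar>phi l z\<bar>) \<le> (phi k z)^2 + (phi l z)^2"
      using sum_squares_bound[of "\<bar>phi k z\<bar>" "\<bar>phi l z\<bar>"] by (simp add: mult.assoc)
    moreover have "0 \<le> \<bar>phi k z\<bar> * \<bar>phi l z\<bar>" by simp
    ultimately show ?thesis unfolding abs_mult by linarith
  qed
  then show "AE z in M. norm (phi k z * phi l z) \<le> norm ((phi k z)^2 + (phi l z)^2)"
    by (intro AE_I2) simp
qed simp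

lemma sum_uy_int_sq_eq_L2sq_proj: "(\<Sum>c<m. (uy_int c)^2) = L2sq M (proj_V M m phi f)"
proof -
  define a where "a k = (\<integral>y. f y * phi k y \<partial>M)" for k
  have "L2sq M (proj_V M m phi f) = (\<integral>x. (\<Sum>k<m. \<Sum>l<m. a k * a l * (phi k x * phi l x)) \<partial>M)"
    unfolding L2sq_def proj_V_def a_def[symmetric] power2_eq_square sum_product
    by (intro Bochner_Integration.integral_cong refl sum.cong) (simp add: mult_ac)
  also have "\<dots> = (\<Sum>k<m. \<integral>x. (\<Sum>l<m. a k * a l * (phi k x * phi l x)) \<partial>M)"
    by (intro Bochner_Integration.integral_sum Bochner_Integration.integrable_sum
        integrable_mult_right integrable_phi_phi) auto
  also have "\<dots> = (\<Sum>k<m. \<Sum>l<m. a k * a l * (\<integral>x. phi k x * phi l x \<partial>M))"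
    by (intro sum.cong refl, subst Bochner_Integration.integral_sum)
       (auto intro!: integrable_mult_right integrable_phi_phi)
  also have "\<dots> = (\<Sum>k<m. (a k)^2)"
    by (simp add: phi_orth power2_eq_square if_distrib sum.delta cong: if_cong)
  finally show ?thesis by (simp add: uy_int_eq_coefficient a_def)
qed

lemma AE_christoffel_eq_m:
  assumes "nu = density M (\<lambda>x. ennreal (wm m phi x))"
  shows "AE z in nu. christoffel z = real m"
proof -
  interpret M: prob_space M by (rule M_prob)
  have "AE x in M. ennreal (w x) = ennreal (wm m phi x)"
    using assms unfolding nu_def by (intro M.density_unique) (auto simp: wm_def)
  then have "AE x in M. w x = wm m phi x"
    using AE_w_nonneg by eventually_elim (use wm_nonneg in auto)
  then show ?thesis
    unfolding AE_density_w by eventually_elim (simp add: christoffel_def christoffel_u)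
qed

lemma AE_uy_nonneg:
  assumes "AE x in M. \<forall>k<m. 0 \<le> phi k x * f x"
  shows "AE z in nu. \<forall>c<m. 0 \<le> uy c z"
  unfolding AE_density_w using assms
proof (rule eventually_mono, intro impI allI)
  fix z c assume p: "\<forall>k<m. 0 \<le> phi k z * f z" and wp: "0 < w z" and c: "c < m"
  have "uy c z = phi c z * f z / w z"
    unfolding uy_def u_def y_def using c wp by (simp add: field_simps)
  then show "0 \<le> uy c z" using p c wp by simp
qed

lemma n_pos: "0 < real n"
  using m_pos nm by simp

lemma scaled_B_eq: "real m / real n * (1 / \<alpha>) * (1 + (1 / \<alpha> - 1) * (real m / real n))
    = B * (B + real (n - m)) / (real n)^2"
proof -
  have d: "real (n - m) = real n - real m" using nm by simp
  show ?thesis unfolding B_def d using alpha n_pos by (simp add: field_simps power2_eq_square)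
qed

lemma le_divide_square:
  fixes x C L P :: real
  assumes "x \<le> C * L + (real n)^2 * P"
  shows "x / (real n)^2 \<le> C / (real n)^2 * L + P"
  using divide_right_mono[OF assms, of "(real n)^2"] n_pos by (simp add: add_divide_distrib)

lemma expectation_bound_general:
  "pair_term_sum / (real n)^2 \<le> real m / real n * (1 / \<alpha>) *
      ((1 + (1 / \<alpha> - 1) * (real m / real n)) + real m * (1 / \<alpha>)) * L2sq M f
    + L2sq M (proj_V M m phi f)"
proof -
  have "pair_term_sum \<le> (B * (B + real (n - m)) + real n * (B * B)) * y_sq_int
      + (real n)^2 * L2sq M (proj_V M m phi f)"
    using pair_term_sum_bound[OF m_pos] unfolding sum_uy_int_sq_eq_L2sq_proj by (simp add: algebra_simps)
  also have "\<dots> \<le> (B * (B + real (n - m)) + real n * (B * B)) * L2sq M f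
      + (real n)^2 * L2sq M (proj_V M m phi f)"
    using y_sq_int_le_L2sq one_le_B by (intro add_right_mono mult_left_mono) auto
  finally have "pair_term_sum \<le> (B * (B + real (n - m)) + real n * (B * B)) * L2sq M f
      + (real n)^2 * L2sq M (proj_V M m phi f)" .
  moreover have "(B * (B + real (n - m)) + real n * (B * B)) / (real n)^2
      = real m / real n * (1 / \<alpha>) * ((1 + (1 / \<alpha> - 1) * (real m / real n)) + real m * (1 / \<alpha>))"
  proof -
    have "real n * (B * B) / (real n)^2 = real m / real n * (1 / \<alpha>) * (real m * (1 / \<alpha>))"
      unfolding B_def using n_pos by (simp add: field_simps power2_eq_square)
    then show ?thesis
      unfolding add_divide_distrib scaled_B_eq[symmetric] by (simp only: distrib_left)
  qed
  ultimately show ?thesis by (metis le_divide_square)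
qed

lemma expectation_bound_christoffel_density:
  assumes "nu = density M (\<lambda>x. ennreal (wm m phi x))"
  shows "pair_term_sum / (real n)^2 \<le> real m / real n * (1 / \<alpha>) *
      (1 + (1 / \<alpha> - 1) * (real m / real n)) * L2sq M f + L2sq M (proj_V M m phi f)"
proof -
  have "pair_term_sum \<le> B * (B + real (n - m)) * y_sq_int + (real n)^2 * L2sq M (proj_V M m phi f)"
    using pair_term_sum_bound_constant_christoffel[OF AE_christoffel_eq_m[OF assms]]
    unfolding sum_uy_int_sq_eq_L2sq_proj .
  also have "\<dots> \<le> B * (B + real (n - m)) * L2sq M f + (real n)^2 * L2sq M (proj_V M m phi f)"
    using y_sq_int_le_L2sq one_le_B by (intro add_right_mono mult_left_mono) auto
  finally show ?thesis unfolding scaled_B_eq by (rule le_divide_square)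
qed

lemma expectation_bound_nonneg:
  assumes "AE x in M. \<forall>k<m. 0 \<le> phi k x * f x"
  shows "pair_term_sum / (real n)^2 \<le> real m / real n * (1 / \<alpha>) *
      (1 + (1 / \<alpha> - 1) * (real m / real n)) * L2sq M f
    + (1 + 2 * (1 / \<alpha>)^2 * (real m / real n)) * L2sq M (proj_V M m phi f)"
proof -
  have P: "0 \<le> L2sq M (proj_V M m phi f)"
    unfolding sum_uy_int_sq_eq_L2sq_proj[symmetric] by (intro sum_nonneg) auto
  have "pair_term_sum \<le> B * (B + real (n - m)) * y_sq_int
      + (B + real (n - m))^2 * L2sq M (proj_V M m phi f)"
    using pair_term_sum_bound_nonneg[OF AE_uy_nonneg[OF assms]]
    unfolding sum_uy_int_sq_eq_L2sq_proj .
  also have "\<dots> \<le> B * (B + real (n - m)) * L2sq M f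
      + (real n)^2 * (1 + 2 * (1 / \<alpha>)^2 * (real m / real n)) * L2sq M (proj_V M m phi f)"
  proof (intro add_mono mult_left_mono mult_right_mono P)
    show "y_sq_int \<le> L2sq M f" by (rule y_sq_int_le_L2sq)
    show "(B + real (n - m))^2 \<le> (real n)^2 * (1 + 2 * (1 / \<alpha>)^2 * (real m / real n))"
      using oversampled_square_le[OF alpha, of "real m" "real n"] nm
      unfolding B_def by (simp add: of_nat_diff)
  qed (use one_le_B in auto)
  finally have "pair_term_sum \<le> B * (B + real (n - m)) * L2sq M f
      + (real n)^2 * ((1 + 2 * (1 / \<alpha>)^2 * (real m / real n)) * L2sq M (proj_V M m phi f))"
    by (simp add: mult.assoc)
  then show ?thesis unfolding scaled_B_eq by (rule le_divide_square)
qed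

end

theorem mainTheorem19:

  fixes M :: "'a::polish_space measure"
    and n m :: nat and phi :: "nat \<Rightarrow> 'a \<Rightarrow> real"
    and w f :: "'a \<Rightarrow> real" and \<alpha> :: real
  assumes M_prob: "prob_space M" and M_borel: "sets M = sets borel"
    and m_pos: "0 < m" and nm: "m \<le> n"
    and phi_meas: "\<And>k. k < m \<Longrightarrow> phi k \<in> borel_measurable M"
    and phi_L2: "\<And>k. k < m \<Longrightarrow> integrable M (\<lambda>x. (phi k x)^2)"
    and phi_orth: "\<And>k l. k < m \<Longrightarrow> l < m \<Longrightarrow>
         (\<integral>x. phi k x * phi l x \<partial>M) = (if k = l then 1 else 0)"
    and w_meas: "w \<in> borel_measurable M"
    and w_nonneg: "\<And>x. x \<in> space M \<Longrightarrow> 0 \<le> w x"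
    and w_int: "integrable M w" and w_one: "(\<integral>x. w x \<partial>M) = 1"
    and alpha: "0 < \<alpha>" "\<alpha> \<le> 1"
    and w_ge: "AE x in M. \<alpha> * wm m phi x \<le> w x"
    and f_meas: "f \<in> borel_measurable M"
    and f_L2: "integrable M (\<lambda>x. (f x)^2)"
  defines "\<beta> \<equiv> 1 + (1 / \<alpha> - 1) * (real m / real n)"
    and "\<xi> \<equiv> (if density M (\<lambda>x. ennreal (w x)) = density M (\<lambda>x. ennreal (wm m phi x))
              then 0 else 1 :: real)"
    and "E \<equiv> (\<integral>\<^sup>+ xs. ennreal (sqnorm2 ((1 / real n) \<cdot>\<^sub>v
              (transpose_mat (Phi_w n m phi w xs) *\<^sub>v fw_vec n f w xs))) \<partial>gamma_n M n m phi w)"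
  shows "E \<le> ennreal (real m / real n * (1 / \<alpha>) * (\<beta> + \<xi> * real m * (1 / \<alpha>)) * L2sq M f
                    + L2sq M (proj_V M m phi f))
         \<and> ((AE x in M. \<forall>k<m. 0 \<le> phi k x * f x) \<longrightarrow>
         E \<le> ennreal (real m / real n * (1 / \<alpha>) * \<beta> * L2sq M f
                    + (1 + 2 * (1 / \<alpha>)^2 * (real m / real n)) * L2sq M (proj_V M m phi f)))"
proof -
  interpret weighted_sampling M n m phi w f \<alpha>
    by (rule weighted_sampling.intro) (use assms in auto)
  have E: "E = ennreal (pair_term_sum / (real n)^2)"
    unfolding E_def by (rule expectation_eq)
  have "pair_term_sum / (real n)^2 \<le> real m / real n * (1 / \<alpha>) * (\<beta> + \<xi> * real m * (1 / \<alpha>)) * L2sq M f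
      + L2sq M (proj_V M m phi f)"
  proof (cases "\<xi> = 0")
    case True
    then show ?thesis
      using expectation_bound_christoffel_density unfolding \<beta>_def \<xi>_def nu_def
      by (simp split: if_splits)
  next
    case False
    then show ?thesis
      using expectation_bound_general unfolding \<beta>_def \<xi>_def nu_def
      by (simp split: if_splits)
  qed
  then show ?thesis
    using expectation_bound_nonneg unfolding E \<beta>_def by (auto intro: ennreal_leI)
qed

end
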